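(* A triangle $T\subset\mathbb{R}^2$ is simultaneously lattice reduced and lattice complete with respect to $\mathbb{Z}^2$ if and only if it is equivalent to a triangle of the form $$T_x=\mathrm{conv}\left\{\binom{-1}{-1},\binom{x}{1},\binom{1}{-x}\right\}$$ with $0\le x<1$.
   Context: Two polygons are equivalent if one is mapped to the other by a composition of translations, dilations $z\mapsto\lambda z$ ($\lambda>0$) and unimodular transformations $z\mapsto Uz$, $U\in\mathrm{GL}_2(\mathbb{Z})$. For a convex body $C\subset\mathbb{R}^2$ (compact convex, non-empty interior): $\mathrm{wdt}(C)=\min_{y\in\mathbb{Z}^2\setminus\{0\}}\max_{a,b\in C}y\cdot(a-b)$; a segment $[a,b]$ with $b-a$ parallel to a nonzero integer vector has lattice length $|b-a|/|v|$ where $v$ is the primitive integer vector that is a positive multiple of $b-a$; $\mathrm{diam}(C)$ is the maximum lattice length of such a segment in $C$. $C$ is lattice reduced if no convex body $C'\subsetneq C$ has $\mathrm{wdt}(C')=\mathrm{wdt}(C)$, and lattice complete if no convex body $C'\supsetneq C$ has $\mathrm{diam}(C')=\mathrm{diam}(C)$. *)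

theory Defs
  imports "HOL-Analysis.Analysis"
begin

definition int_vec :: "real \<times> real \<Rightarrow> bool" where
  "int_vec y \<longleftrightarrow> fst y \<in> \<int> \<and> snd y \<in> \<int>"

definition primitive_vec :: "real \<times> real \<Rightarrow> bool" where
  "primitive_vec v \<longleftrightarrow> int_vec v \<and> gcd \<lfloor>fst v\<rfloor> \<lfloor>snd v\<rfloor> = 1"

definition convex_body :: "(real \<times> real) set \<Rightarrow> bool" where
  "convex_body C \<longleftrightarrow> compact C \<and> convex C \<and> interior C \<noteq> {}"

definition width_dir :: "(real \<times> real) set \<Rightarrow> real \<times> real \<Rightarrow> real" where
  "width_dir C y = Sup {y \<bullet> (a - b) | a b. a \<in> C \<and> b \<in> C}"

definition lattice_width :: "(real \<times> real) set \<Rightarrow> real" where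
  "lattice_width C = Inf {width_dir C y | y. int_vec y \<and> y \<noteq> 0}"

text \<open>Lattice length of [a,b] with b - a = t v, v primitive, t \<ge> 0, is t;
  lattice diameter is the maximum of these over segments in C.\<close>
definition lattice_diam :: "(real \<times> real) set \<Rightarrow> real" where
  "lattice_diam C = Sup {t. \<exists>a b v. a \<in> C \<and> b \<in> C \<and> primitive_vec v \<and> t \<ge> 0 \<and> b - a = t *\<^sub>R v}"

definition lattice_reduced :: "(real \<times> real) set \<Rightarrow> bool" where
  "lattice_reduced C \<longleftrightarrow> convex_body C \<and>
     (\<forall>C'. convex_body C' \<and> C' \<subset> C \<longrightarrow> lattice_width C' \<noteq> lattice_width C)"

definition lattice_complete :: "(real \<times> real) set \<Rightarrow> bool" where
  "lattice_complete C \<longleftrightarrow> convex_body C \<and>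
     (\<forall>C'. convex_body C' \<and> C \<subset> C' \<longrightarrow> lattice_diam C' \<noteq> lattice_diam C)"

definition triangle :: "(real \<times> real) set \<Rightarrow> bool" where
  "triangle T \<longleftrightarrow> (\<exists>a b c. \<not> collinear {a, b, c} \<and> T = convex hull {a, b, c})"

definition unimod_map :: "int \<Rightarrow> int \<Rightarrow> int \<Rightarrow> int \<Rightarrow> real \<times> real \<Rightarrow> real \<times> real" where
  "unimod_map a b c d z = (of_int a * fst z + of_int b * snd z, of_int c * fst z + of_int d * snd z)"

text \<open>Compositions of translations, positive dilations and unimodular maps are
  exactly the maps z \<mapsto> \<lambda> U z + t.\<close>
definition lattice_equiv :: "(real \<times> real) set \<Rightarrow> (real \<times> real) set \<Rightarrow> bool" where
  "lattice_equiv P Q \<longleftrightarrow> (\<exists>(r::real) a b c d t. r > 0 \<and> \<bar>a * d - b * c\<bar> = 1 \<and>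
      Q = (\<lambda>z. r *\<^sub>R unimod_map a b c d z + t) ` P)"

definition T_tri :: "real \<Rightarrow> (real \<times> real) set" where
  "T_tri x = convex hull {(-1, -1), (x, 1), (1, -x)}"

end

theory Submission
  imports Defs
begin

(*
  A triangle T = conv {a, b, c} is reduced and complete exactly when it has "lattice cevians":
  integer vectors z_a, z_b, z_c with z_a + z_b + z_c = 0 and det (z_a, z_b) = +-1, a ratio
  0 < l < 1 and D > 0 such that each vertex v, moved by D z_v, lands on the opposite side and
  divides it (cyclically) in the ratio l : 1 - l.

  In the affine coordinates (x, y) of T, chords of T are measured by the hexagonal norm
  max (|x|, |y|, |x + y|). For every nonzero integer pair (m, n) one of the three numbers
  m l - n, m (1 - l) + n l and their sum has absolute value at least 1; this yields lattice
  diameter D and lattice width D / (l^2 - l + 1). A proper convex subset misses a vertex and loses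
  width in the direction dual to that vertex's cevian; a strictly larger convex body contains a
  point beyond a side, through which the opposite cevian can be prolonged.

  Conversely, if T is complete, pushing a side outwards must create a longer lattice segment, and
  discreteness of Z^2 turns this into an integer vector of lattice length exactly D from each
  vertex to the opposite side. The hexagonal norm shows that the three vectors sum to 0, have
  equal ratios and span Z^2. Completeness alone therefore forces the configuration, and the
  configuration is carried onto that of T_x, x = |2 l - 1|, by a unimodular affine map.
*)

definition det2 :: "real \<times> real \<Rightarrow> real \<times> real \<Rightarrow> real" where
  "det2 p q = fst p * snd q - snd p * fst q"

lemma det2_bilinear:
  "det2 (x + y) w = det2 x w + det2 y w" "det2 w (x + y) = det2 w x + det2 w y"
  "det2 (x - y) w = det2 x w - det2 y w" "det2 w (x - y) = det2 w x - det2 w y"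
  "det2 (c *\<^sub>R x) w = c * det2 x w" "det2 w (c *\<^sub>R x) = c * det2 w x"
  "det2 (- x) w = - det2 x w" "det2 w (- x) = - det2 w x"
  "det2 x x = 0"
  by (auto simp: det2_def algebra_simps)

lemma det2_decomposition:
  assumes "det2 u v \<noteq> 0"
  shows "w = (det2 w v / det2 u v) *\<^sub>R u + (det2 u w / det2 u v) *\<^sub>R v"
proof -
  have "det2 u v *\<^sub>R w = det2 w v *\<^sub>R u + det2 u w *\<^sub>R v"
    by (simp add: det2_def prod_eq_iff algebra_simps)
  then have "(1 / det2 u v) *\<^sub>R (det2 u v *\<^sub>R w) = (1 / det2 u v) *\<^sub>R (det2 w v *\<^sub>R u + det2 u w *\<^sub>R v)"
    by simp
  then show ?thesis
    using assms by (simp add: scaleR_add_right)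
qed

lemma det2_coords_unique:
  assumes "det2 u v \<noteq> 0" "x *\<^sub>R u + y *\<^sub>R v = x' *\<^sub>R u + y' *\<^sub>R v"
  shows "x = x' \<and> y = y'"
proof -
  have "det2 (x *\<^sub>R u + y *\<^sub>R v) v = det2 (x' *\<^sub>R u + y' *\<^sub>R v) v"
    "det2 u (x *\<^sub>R u + y *\<^sub>R v) = det2 u (x' *\<^sub>R u + y' *\<^sub>R v)"
    using assms(2) by simp_all
  then have "x * det2 u v = x' * det2 u v" "y * det2 u v = y' * det2 u v"
    by (simp_all add: det2_bilinear)
  then show ?thesis
    using assms(1) by simp
qed

lemma inner_eq_0_basis_imp_eq_0:
  assumes "det2 u v \<noteq> 0" "y \<bullet> u = 0" "y \<bullet> v = 0"
  shows "y = 0"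
proof -
  have "fst y * det2 u v = 0" "snd y * det2 u v = 0"
    using assms(2,3) unfolding det2_def inner_prod_def inner_real_def by algebra+
  then show ?thesis
    using assms(1) by (simp add: prod_eq_iff)
qed

lemma det2_eq_0_iff: "det2 x y = 0 \<longleftrightarrow> x = 0 \<or> y = 0 \<or> (\<exists>c. y = c *\<^sub>R x)"
proof
  assume d: "det2 x y = 0"
  show "x = 0 \<or> y = 0 \<or> (\<exists>c. y = c *\<^sub>R x)"
  proof (cases "x = 0")
    case False
    obtain x1 x2 y1 y2 where xy: "x = (x1, x2)" "y = (y1, y2)"
      by fastforce
    have eq: "(x \<bullet> x) *\<^sub>R y = (x \<bullet> y) *\<^sub>R x"
      using d unfolding xy det2_def by (simp add: inner_Pair) algebra
    have "y = (1 / (x \<bullet> x)) *\<^sub>R ((x \<bullet> x) *\<^sub>R y)"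
      using False by simp
    also have "\<dots> = ((x \<bullet> y) / (x \<bullet> x)) *\<^sub>R x"
      unfolding eq by simp
    finally show ?thesis
      by blast
  qed simp
qed (auto simp: det2_def)

lemma int_vec_iff: "int_vec z \<longleftrightarrow> (\<exists>i j. z = (of_int i, of_int j))"
  unfolding int_vec_def by (cases z) (auto elim!: Ints_cases)

lemma int_vec_add: "int_vec a \<Longrightarrow> int_vec b \<Longrightarrow> int_vec (a + b)"
  and int_vec_minus: "int_vec a \<Longrightarrow> int_vec (- a)"
  and int_vec_diff: "int_vec a \<Longrightarrow> int_vec b \<Longrightarrow> int_vec (a - b)"
  and int_vec_scaleR: "k \<in> \<int> \<Longrightarrow> int_vec a \<Longrightarrow> int_vec (k *\<^sub>R a)"
  and int_vec_inner_Ints: "int_vec a \<Longrightarrow> int_vec b \<Longrightarrow> a \<bullet> b \<in> \<int>"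
  and int_vec_det2_Ints: "int_vec a \<Longrightarrow> int_vec b \<Longrightarrow> det2 a b \<in> \<int>"
  unfolding int_vec_def det2_def inner_prod_def by (auto simp: inner_real_def)

lemma norm_ge_1_if_int_vec:
  assumes "int_vec z" "z \<noteq> 0"
  shows "1 \<le> norm z"
proof (cases z)
  case (Pair x y)
  have "x \<in> \<int>" "y \<in> \<int>" "x \<noteq> 0 \<or> y \<noteq> 0"
    using assms Pair by (auto simp: int_vec_def zero_prod_def)
  then have "1 \<le> norm x \<or> 1 \<le> norm y"
    by (metis Ints_nonzero_abs_ge1 real_norm_def)
  then show ?thesis
    using norm_fst_le[of x y] norm_snd_le[of y x] Pair by fastforce
qed

lemma primitive_vec_imp_int_vec: "primitive_vec v \<Longrightarrow> int_vec v"
  and primitive_vec_nonzero: "primitive_vec v \<Longrightarrow> v \<noteq> 0"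
  unfolding primitive_vec_def by (auto simp: zero_prod_def)

lemma primitive_vec_1_0: "primitive_vec (1, 0)"
  unfolding primitive_vec_def int_vec_def by simp

lemma int_vec_primitive_multiple:
  assumes "int_vec z" "z \<noteq> 0"
  obtains g v where "1 \<le> g" "primitive_vec v" "z = g *\<^sub>R v"
proof -
  obtain i j where z: "z = (of_int i, of_int j)"
    using assms(1) int_vec_iff by blast
  have ij: "i \<noteq> 0 \<or> j \<noteq> 0"
    using assms(2) z by (auto simp: zero_prod_def)
  define g where "g = gcd i j"
  define v :: "real \<times> real" where "v = (of_int (i div g), of_int (j div g))"
  have "primitive_vec v"
    using div_gcd_coprime[OF ij] unfolding primitive_vec_def int_vec_def v_def g_def
    by (simp add: coprime_iff_gcd_eq_1)
  moreover have "z = (of_int g :: real) *\<^sub>R v"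
    unfolding z v_def g_def by (simp flip: of_int_mult)
  moreover have "1 \<le> (of_int g :: real)"
    using ij unfolding g_def by (simp add: int_one_le_iff_zero_less)
  ultimately show ?thesis
    using that by blast
qed

lemma finite_int_vecs_bounded:
  assumes "bounded S"
  shows "finite {z \<in> S. int_vec z}"
proof -
  obtain R where R: "\<And>z. z \<in> S \<Longrightarrow> norm z \<le> R"
    using assms bounded_iff by blast
  define N where "N = \<lceil>R\<rceil>"
  have "{z \<in> S. int_vec z} \<subseteq> (\<lambda>(i, j). (real_of_int i, real_of_int j)) ` ({-N..N} \<times> {-N..N})"
  proof
    fix z assume z: "z \<in> {z \<in> S. int_vec z}"
    then obtain i j where ij: "z = (of_int i, of_int j)"
      using int_vec_iff by blast
    have "\<bar>real_of_int i\<bar> \<le> R" "\<bar>real_of_int j\<bar> \<le> R"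
      using R[of z] z norm_fst_le[of "real_of_int i" "real_of_int j"]
        norm_snd_le[of "real_of_int j" "real_of_int i"] unfolding ij by auto
    then have "\<bar>i\<bar> \<le> N" "\<bar>j\<bar> \<le> N"
      unfolding N_def by (simp_all add: le_ceiling_iff)
    then have "(i, j) \<in> {-N..N} \<times> {-N..N}"
      by auto
    then show "z \<in> (\<lambda>(i, j). (real_of_int i, real_of_int j)) ` ({-N..N} \<times> {-N..N})"
      unfolding ij by force
  qed
  then show ?thesis
    by (rule finite_subset) simp
qed

lemma int_vec_values_gap:
  fixes f :: "real \<times> real \<Rightarrow> real"
  assumes "bounded S"
  obtains \<delta> where "0 < \<delta>" "\<And>z. z \<in> S \<Longrightarrow> int_vec z \<Longrightarrow> c < f z \<Longrightarrow> c + \<delta> \<le> f z"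
proof -
  define Z where "Z = {z \<in> S. int_vec z \<and> c < f z}"
  have "finite Z"
    using finite_int_vecs_bounded[OF assms] unfolding Z_def by (rule finite_subset[rotated]) auto
  define \<delta> where "\<delta> = Min (insert 1 ((\<lambda>z. f z - c) ` Z))"
  have "0 < \<delta>"
    unfolding \<delta>_def using \<open>finite Z\<close> by (subst Min_gr_iff) (auto simp: Z_def)
  moreover have "c + \<delta> \<le> f z" if "z \<in> S" "int_vec z" "c < f z" for z
  proof -
    have "\<delta> \<le> f z - c"
      unfolding \<delta>_def using \<open>finite Z\<close> that by (intro Min_le) (auto simp: Z_def)
    then show ?thesis
      by simp
  qed
  ultimately show ?thesis
    using that by blast
qed

section \<open>The hexagonal norm\<close>

text \<open>The norm whose unit ball is the difference body \<open>\<Delta> - \<Delta>\<close> of the standard triangle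
  \<open>\<Delta> = conv {0, e\<^sub>1, e\<^sub>2}\<close>; in affine coordinates of a triangle it measures chords.\<close>

definition hexnorm :: "real \<Rightarrow> real \<Rightarrow> real" where
  "hexnorm x y = max \<bar>x\<bar> (max \<bar>y\<bar> \<bar>x + y\<bar>)"

lemma hexnorm_nonneg: "0 \<le> hexnorm x y"
  unfolding hexnorm_def by simp

lemma hexnorm_commute: "hexnorm y x = hexnorm x y"
  unfolding hexnorm_def by (simp add: add.commute max.left_commute)

lemma hexnorm_uminus: "hexnorm (- x) (- y) = hexnorm x y"
  unfolding hexnorm_def by (simp only: abs_minus_cancel flip: minus_add_distrib)

lemma hexnorm_scale: "hexnorm (c * x) (c * y) = \<bar>c\<bar> * hexnorm x y"
  unfolding hexnorm_def by (simp add: abs_mult max_mult_distrib_left flip: distrib_left)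

lemma hexnorm_le_iff: "hexnorm x y \<le> r \<longleftrightarrow> \<bar>x\<bar> \<le> r \<and> \<bar>y\<bar> \<le> r \<and> \<bar>x + y\<bar> \<le> r"
  and hexnorm_less_iff: "hexnorm x y < r \<longleftrightarrow> \<bar>x\<bar> < r \<and> \<bar>y\<bar> < r \<and> \<bar>x + y\<bar> < r"
  unfolding hexnorm_def by auto

lemma hexnorm_int_combination_ge_1:
  fixes m n :: int and l :: real
  assumes "m \<noteq> 0 \<or> n \<noteq> 0" "0 < l" "l < 1"
  shows "1 \<le> hexnorm (m * l - n) (m * (1 - l) + n * l)"
proof -
  have pos: "1 \<le> hexnorm (m * l - n) (m * (1 - l) + n * l)" if "0 < m" for m n :: int
  proof (cases "0 < n")
    case True
    have "(1 - l) * 1 + l * 1 \<le> (1 - l) * m + l * n"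
      using True that assms(2,3) by (intro add_mono mult_left_mono) auto
    then show ?thesis
      unfolding hexnorm_def by (simp add: algebra_simps)
  next
    case False
    have "0 \<le> (1 - l) * (- n)"
      using False assms(3) by (intro mult_nonneg_nonneg) auto
    then have "1 \<le> \<bar>m * l - n + (m * (1 - l) + n * l)\<bar>"
      using that by (simp add: algebra_simps)
    then show ?thesis
      unfolding hexnorm_def by simp
  qed
  consider "m = 0" | "0 < m" | "0 < - m"
    by linarith
  then show ?thesis
  proof cases
    case 1
    then show ?thesis
      using assms(1) unfolding hexnorm_def by simp
  next
    case 2
    then show ?thesis
      by (rule pos)
  next
    case 3
    have "hexnorm (m * l - n) (m * (1 - l) + n * l)
        = hexnorm (- (m * l - n)) (- (m * (1 - l) + n * l))"
      by (rule hexnorm_uminus[symmetric])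
    also have "\<dots> = hexnorm (of_int (- m) * l - of_int (- n)) (of_int (- m) * (1 - l) + of_int (- n) * l)"
      by (simp add: algebra_simps)
    finally show ?thesis
      using pos[OF 3, of "- n"] by simp
  qed
qed

definition unimodular_pair :: "real \<times> real \<Rightarrow> real \<times> real \<Rightarrow> bool" where
  "unimodular_pair p q \<longleftrightarrow> int_vec p \<and> int_vec q \<and> \<bar>det2 p q\<bar> = 1"

lemma unimodular_pair_int_coords:
  assumes "unimodular_pair p q" "int_vec z"
  obtains m n where "m \<in> \<int>" "n \<in> \<int>" "z = m *\<^sub>R p + n *\<^sub>R q"
proof -
  have d: "det2 p q = 1 \<or> det2 p q = -1" "det2 p q \<noteq> 0"
    using assms(1) unfolding unimodular_pair_def by auto
  then have "z = (det2 p q * det2 z q) *\<^sub>R p + (det2 p q * det2 p z) *\<^sub>R q"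
    using det2_decomposition[of p q z] by auto
  moreover have "det2 p q * det2 z q \<in> \<int>" "det2 p q * det2 p z \<in> \<int>"
    using assms int_vec_det2_Ints unfolding unimodular_pair_def by auto
  ultimately show ?thesis
    using that by blast
qed

lemma unimodular_pair_dual:
  assumes "unimodular_pair p q"
  obtains y where "int_vec y" "y \<bullet> p = 1" "y \<bullet> q = 0"
proof -
  define d where "d = det2 p q"
  have "d * d = 1"
    using assms unfolding unimodular_pair_def d_def by (metis abs_mult_self_eq mult_1)
  moreover have "d \<in> \<int>"
    using assms int_vec_det2_Ints unfolding unimodular_pair_def d_def by blast
  ultimately show ?thesis
    using assms that[of "d *\<^sub>R (snd q, - fst q)"]
    unfolding unimodular_pair_def int_vec_def d_def det2_def
    by (auto simp: inner_prod_def algebra_simps)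
qed

lemma unimodular_pair_primitive:
  assumes "unimodular_pair p q"
  shows "primitive_vec p"
proof -
  obtain i j where p: "p = (of_int i, of_int j)"
    using assms int_vec_iff unfolding unimodular_pair_def by blast
  obtain k l where q: "q = (of_int k, of_int l)"
    using assms int_vec_iff unfolding unimodular_pair_def by blast
  have "\<bar>of_int (i * l - j * k) :: real\<bar> = 1"
    using assms unfolding unimodular_pair_def p q det2_def by simp
  then have "\<bar>i * l - j * k\<bar> = 1"
    by (metis of_int_1 of_int_abs of_int_eq_iff)
  then have "coprime i j"
    by (metis coprime_def dvd_abs_iff dvd_diff dvd_mult2)
  then show ?thesis
    unfolding primitive_vec_def int_vec_def p by (simp add: coprime_iff_gcd_eq_1)
qed

lemma int_vec_fractional_parts:
  assumes "int_vec p" "int_vec q" "int_vec e" "e = x *\<^sub>R p + y *\<^sub>R q" "\<not> (x \<in> \<int> \<and> y \<in> \<int>)"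
  obtains \<sigma> \<tau> where "0 \<le> \<sigma>" "\<sigma> < 1" "0 \<le> \<tau>" "\<tau> < 1" "\<sigma> \<noteq> 0 \<or> \<tau> \<noteq> 0"
    "int_vec (\<sigma> *\<^sub>R p + \<tau> *\<^sub>R q)"
proof -
  have "frac x *\<^sub>R p + frac y *\<^sub>R q = e - of_int \<lfloor>x\<rfloor> *\<^sub>R p - of_int \<lfloor>y\<rfloor> *\<^sub>R q"
    unfolding assms(4) frac_def by (simp add: algebra_simps)
  moreover have "int_vec (e - of_int \<lfloor>x\<rfloor> *\<^sub>R p - of_int \<lfloor>y\<rfloor> *\<^sub>R q)"
    using assms(1-3) by (intro int_vec_diff int_vec_scaleR) auto
  moreover have "frac x \<noteq> 0 \<or> frac y \<noteq> 0"
    using assms(5) by (simp add: frac_eq_0_iff)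
  ultimately show ?thesis
    using that frac_lt_1 frac_ge_0 by metis
qed

lemma abs_det2_eq_1_if_inverse_integral:
  assumes "int_vec p" "int_vec q" "det2 p q \<noteq> 0"
    and "fst p / det2 p q \<in> \<int>" "snd p / det2 p q \<in> \<int>" "fst q / det2 p q \<in> \<int>" "snd q / det2 p q \<in> \<int>"
  shows "\<bar>det2 p q\<bar> = 1"
proof -
  define d where "d = det2 p q"
  have "(snd q / d) * (fst p / d) - (fst q / d) * (snd p / d) = (fst p * snd q - snd p * fst q) / (d * d)"
    using assms(3) unfolding d_def by (simp add: field_simps)
  also have "\<dots> = 1 / d"
    using assms(3) unfolding d_def det2_def[symmetric] by simp
  finally have "1 / d \<in> \<int>"
    using assms(4-7) unfolding d_def by (metis Ints_diff Ints_mult)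
  then obtain i j where "1 / d = of_int i" "d = of_int j"
    using int_vec_det2_Ints[OF assms(1,2)] unfolding d_def by (metis Ints_cases)
  then have "of_int (i * j) = (1::real)"
    using assms(3) unfolding d_def by (simp add: field_simps)
  then have "\<bar>j\<bar> = 1"
    by (metis of_int_eq_1_iff zmult_eq_1_iff abs_1 abs_neg_one)
  then show ?thesis
    using \<open>d = of_int j\<close> unfolding d_def by (metis of_int_1 of_int_abs)
qed

lemma not_unimodular_fractional_point:
  assumes "int_vec p" "int_vec q" "det2 p q \<noteq> 0" "\<bar>det2 p q\<bar> \<noteq> 1"
  obtains \<sigma> \<tau> where "0 \<le> \<sigma>" "\<sigma> < 1" "0 \<le> \<tau>" "\<tau> < 1" "\<sigma> \<noteq> 0 \<or> \<tau> \<noteq> 0"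
    "int_vec (\<sigma> *\<^sub>R p + \<tau> *\<^sub>R q)"
proof -
  define d where "d = det2 p q"
  have e: "(1, 0) = (snd q / d) *\<^sub>R p + (- snd p / d) *\<^sub>R q"
    "(0, 1) = (- fst q / d) *\<^sub>R p + (fst p / d) *\<^sub>R q"
    using det2_decomposition[OF assms(3), of "(1, 0)"] det2_decomposition[OF assms(3), of "(0, 1)"]
    unfolding d_def by (simp_all add: det2_def)
  have "\<not> (snd q / d \<in> \<int> \<and> - snd p / d \<in> \<int> \<and> - fst q / d \<in> \<int> \<and> fst p / d \<in> \<int>)"
    using abs_det2_eq_1_if_inverse_integral[OF assms(1-3)] assms(4) unfolding d_def
    by (metis Ints_minus minus_divide_left minus_minus)
  then consider "\<not> (snd q / d \<in> \<int> \<and> - snd p / d \<in> \<int>)" | "\<not> (- fst q / d \<in> \<int> \<and> fst p / d \<in> \<int>)"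
    by blast
  then show ?thesis
  proof cases
    case 1
    show ?thesis
      by (rule int_vec_fractional_parts[OF assms(1,2) _ e(1) 1 that]) (simp add: int_vec_def)
  next
    case 2
    show ?thesis
      by (rule int_vec_fractional_parts[OF assms(1,2) _ e(2) 2 that]) (simp add: int_vec_def)
  qed
qed

definition lattice_lengths :: "(real \<times> real) set \<Rightarrow> real set" where
  "lattice_lengths K = {t. \<exists>a b v. a \<in> K \<and> b \<in> K \<and> primitive_vec v \<and> t \<ge> 0 \<and> b - a = t *\<^sub>R v}"

lemma lattice_diam_eq_Sup: "lattice_diam K = Sup (lattice_lengths K)"
  unfolding lattice_diam_def lattice_lengths_def ..

lemma lattice_lengths_bdd_above:
  assumes "bounded K"
  shows "bdd_above (lattice_lengths K)"
proof -
  obtain B where B: "\<And>x. x \<in> K \<Longrightarrow> norm x \<le> B"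
    using assms bounded_iff by blast
  have "t \<le> 2 * B" if t: "t \<in> lattice_lengths K" for t
  proof -
    obtain a b v where h: "a \<in> K" "b \<in> K" "primitive_vec v" "0 \<le> t" "b - a = t *\<^sub>R v"
      using t unfolding lattice_lengths_def by blast
    have "1 \<le> norm v"
      using h(3) by (intro norm_ge_1_if_int_vec primitive_vec_imp_int_vec primitive_vec_nonzero)
    then have "t \<le> norm (b - a)"
      using h(4,5) by (simp add: mult_le_cancel_left1)
    also have "\<dots> \<le> 2 * B"
      using norm_triangle_ineq4[of b a] B[OF h(1)] B[OF h(2)] by linarith
    finally show ?thesis .
  qed
  then show ?thesis
    by (rule bdd_aboveI)
qed

lemma zero_in_lattice_lengths:
  assumes "a \<in> K"
  shows "0 \<in> lattice_lengths K"
proof -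
  have "a - a = 0 *\<^sub>R (1, 0)"
    by (simp add: zero_prod_def)
  then show ?thesis
    unfolding lattice_lengths_def using assms primitive_vec_1_0 by blast
qed

lemma lattice_length_le_lattice_diam:
  assumes "bounded K" "a \<in> K" "b \<in> K" "primitive_vec v" "0 \<le> t" "b - a = t *\<^sub>R v"
  shows "t \<le> lattice_diam K"
  unfolding lattice_diam_eq_Sup
  by (rule cSup_upper[OF _ lattice_lengths_bdd_above[OF assms(1)]])
    (use assms in \<open>unfold lattice_lengths_def, blast\<close>)

lemma lattice_diam_le:
  assumes "K \<noteq> {}"
    and "\<And>a b v t. a \<in> K \<Longrightarrow> b \<in> K \<Longrightarrow> primitive_vec v \<Longrightarrow> 0 \<le> t \<Longrightarrow> b - a = t *\<^sub>R v \<Longrightarrow> t \<le> D"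
  shows "lattice_diam K \<le> D"
  unfolding lattice_diam_eq_Sup
proof (rule cSup_least)
  show "lattice_lengths K \<noteq> {}"
    using assms(1) zero_in_lattice_lengths by blast
  show "t \<le> D" if "t \<in> lattice_lengths K" for t
    using that assms(2) unfolding lattice_lengths_def by blast
qed

lemma lattice_diam_gtE:
  assumes "K \<noteq> {}" "D < lattice_diam K"
  obtains a b v t where "a \<in> K" "b \<in> K" "primitive_vec v" "0 \<le> t" "b - a = t *\<^sub>R v" "D < t"
proof -
  have "lattice_lengths K \<noteq> {}"
    using assms(1) zero_in_lattice_lengths by blast
  then obtain t where "t \<in> lattice_lengths K" "D < t"
    using less_cSupE assms(2) unfolding lattice_diam_eq_Sup by metis
  then show ?thesis
    using that unfolding lattice_lengths_def by blast
qed

lemma lattice_diam_mono: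
  assumes "K \<subseteq> K'" "K \<noteq> {}" "bounded K'"
  shows "lattice_diam K \<le> lattice_diam K'"
  using assms by (intro lattice_diam_le) (auto intro: lattice_length_le_lattice_diam)

lemma inner_diff_le_width_dir:
  assumes "bounded K" "p \<in> K" "q \<in> K"
  shows "y \<bullet> (p - q) \<le> width_dir K y"
proof -
  obtain B where B: "\<And>x. x \<in> K \<Longrightarrow> norm x \<le> B"
    using assms(1) bounded_iff by blast
  have "s \<le> norm y * (2 * B)" if s: "s \<in> {y \<bullet> (a - b) | a b. a \<in> K \<and> b \<in> K}" for s
  proof -
    obtain a b where h: "a \<in> K" "b \<in> K" "s = y \<bullet> (a - b)"
      using s by blast
    have "norm (a - b) \<le> 2 * B"
      using norm_triangle_ineq4[of a b] B[OF h(1)] B[OF h(2)] by linarith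
    then show ?thesis
      using h(3) norm_cauchy_schwarz[of y "a - b"] by (smt (verit) mult_left_mono norm_ge_zero)
  qed
  then have bdd: "bdd_above {y \<bullet> (a - b) | a b. a \<in> K \<and> b \<in> K}"
    by (rule bdd_aboveI)
  show ?thesis
    unfolding width_dir_def by (rule cSup_upper[OF _ bdd]) (use assms in blast)
qed

lemma width_dir_le:
  assumes "K \<noteq> {}" "\<And>p q. p \<in> K \<Longrightarrow> q \<in> K \<Longrightarrow> y \<bullet> (p - q) \<le> M"
  shows "width_dir K y \<le> M"
  unfolding width_dir_def
proof (rule cSup_least)
  show "{y \<bullet> (p - q) | p q. p \<in> K \<and> q \<in> K} \<noteq> {}"
    using assms(1) by blast
  show "s \<le> M" if "s \<in> {y \<bullet> (p - q) | p q. p \<in> K \<and> q \<in> K}" for s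
    using that assms(2) by blast
qed

lemma width_dir_nonneg:
  assumes "bounded K" "p \<in> K"
  shows "0 \<le> width_dir K y"
  using inner_diff_le_width_dir[OF assms assms(2), of y] by simp

lemma lattice_width_le_width_dir:
  assumes "bounded K" "K \<noteq> {}" "int_vec y" "y \<noteq> 0"
  shows "lattice_width K \<le> width_dir K y"
  unfolding lattice_width_def
proof (rule cInf_lower)
  show "bdd_below {width_dir K y | y. int_vec y \<and> y \<noteq> 0}"
    using assms(1,2) width_dir_nonneg by (intro bdd_belowI[of _ 0]) blast
qed (use assms in blast)

lemma lattice_width_ge:
  assumes "\<And>y. int_vec y \<Longrightarrow> y \<noteq> 0 \<Longrightarrow> M \<le> width_dir K y"
  shows "M \<le> lattice_width K"
proof -
  have "int_vec (1::real, 0::real)" "(1::real, 0::real) \<noteq> 0"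
    by (auto simp: int_vec_def zero_prod_def)
  then show ?thesis
    unfolding lattice_width_def by (intro cInf_greatest) (use assms in auto)
qed

lemma collinear_iff_det2: "collinear {a, b, c} \<longleftrightarrow> det2 (b - a) (c - a) = 0"
proof -
  have "collinear {a, b, c} \<longleftrightarrow> collinear {0, b - a, c - a}"
    using collinear_3[of b a c] by (simp add: insert_commute NO_MATCH_def)
  then show ?thesis
    by (simp add: collinear_lemma det2_eq_0_iff)
qed

lemma convex_body_triangle:
  assumes "\<not> collinear {a, b, c}"
  shows "convex_body (convex hull {a, b, c})"
proof -
  have "aff_dim {a, b, c} = DIM(real \<times> real)"
    using assms aff_dim_le_DIM[of "{a, b, c}"] collinear_aff_dim[of "{a, b, c}"] by simp
  then have "affine hull (convex hull {a, b, c}) = UNIV"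
    using aff_dim_eq_full[of "{a, b, c}"] by simp
  then have "interior (convex hull {a, b, c}) = rel_interior (convex hull {a, b, c})"
    by (rule rel_interior_interior[symmetric])
  then show ?thesis
    unfolding convex_body_def
    by (simp add: finite_imp_compact_convex_hull rel_interior_eq_empty)
qed

lemma triangle_chord_hexnorm_le:
  assumes "det2 (b - a) (c - a) \<noteq> 0" "p \<in> convex hull {a, b, c}" "q \<in> convex hull {a, b, c}"
    and "q - p = x *\<^sub>R (b - a) + y *\<^sub>R (c - a)"
  shows "hexnorm x y \<le> 1"
proof -
  obtain x1 y1 where p: "0 \<le> x1" "0 \<le> y1" "x1 + y1 \<le> 1" "p = a + x1 *\<^sub>R (b - a) + y1 *\<^sub>R (c - a)"
    using assms(2) unfolding convex_hull_3_alt by blast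
  obtain x2 y2 where q: "0 \<le> x2" "0 \<le> y2" "x2 + y2 \<le> 1" "q = a + x2 *\<^sub>R (b - a) + y2 *\<^sub>R (c - a)"
    using assms(3) unfolding convex_hull_3_alt by blast
  have "(x2 - x1) *\<^sub>R (b - a) + (y2 - y1) *\<^sub>R (c - a) = x *\<^sub>R (b - a) + y *\<^sub>R (c - a)"
    using assms(4) unfolding p(4) q(4) by (simp add: algebra_simps)
  then have "x = x2 - x1" "y = y2 - y1"
    using det2_coords_unique[OF assms(1)] by metis+
  then show ?thesis
    using p q unfolding hexnorm_le_iff by auto
qed

lemma triangle_chord_exists:
  assumes "hexnorm x y \<le> 1"
  obtains p q where "p \<in> convex hull {a, b, c}" "q \<in> convex hull {a, b, c}"
    "q - p = x *\<^sub>R (b - a) + y *\<^sub>R (c - a)"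
proof -
  have "max (- x) 0 + max (- y) 0 \<le> 1" "max x 0 + max y 0 \<le> 1"
    using assms unfolding hexnorm_le_iff max_def by (auto simp: abs_le_iff)
  then have "a + max (- x) 0 *\<^sub>R (b - a) + max (- y) 0 *\<^sub>R (c - a) \<in> convex hull {a, b, c}"
    "a + max x 0 *\<^sub>R (b - a) + max y 0 *\<^sub>R (c - a) \<in> convex hull {a, b, c}"
    unfolding convex_hull_3_alt by force+
  moreover have "(a + max x 0 *\<^sub>R (b - a) + max y 0 *\<^sub>R (c - a))
      - (a + max (- x) 0 *\<^sub>R (b - a) + max (- y) 0 *\<^sub>R (c - a))
      = x *\<^sub>R (b - a) + y *\<^sub>R (c - a)"
    by (simp add: max_def algebra_simps)
  ultimately show ?thesis
    using that by blast
qed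

lemma lattice_diam_triangle_ge:
  assumes "int_vec z" "z \<noteq> 0" "z = x *\<^sub>R (b - a) + y *\<^sub>R (c - a)"
  shows "1 \<le> lattice_diam (convex hull {a, b, c}) * hexnorm x y"
proof -
  define N where "N = hexnorm x y"
  have "x \<noteq> 0 \<or> y \<noteq> 0"
    using assms(2,3) by auto
  then have "0 < N"
    unfolding N_def hexnorm_def by (auto simp: less_max_iff_disj)
  have "hexnorm (x / N) (y / N) \<le> 1"
    using hexnorm_scale[of "1 / N" x y] \<open>0 < N\<close> unfolding N_def by simp
  then obtain p q where pq: "p \<in> convex hull {a, b, c}" "q \<in> convex hull {a, b, c}"
    "q - p = (x / N) *\<^sub>R (b - a) + (y / N) *\<^sub>R (c - a)"
    by (rule triangle_chord_exists)
  obtain g w where gw: "1 \<le> g" "primitive_vec w" "z = g *\<^sub>R w"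
    using int_vec_primitive_multiple[OF assms(1,2)] .
  have "q - p = (1 / N) *\<^sub>R z"
    using pq(3) assms(3) by (simp add: scaleR_add_right)
  then have "q - p = (g / N) *\<^sub>R w"
    using gw(3) by simp
  then have "g / N \<le> lattice_diam (convex hull {a, b, c})"
    using \<open>0 < N\<close> gw(1)
    by (intro lattice_length_le_lattice_diam[OF _ pq(1,2) gw(2)]) (auto simp: finite_imp_bounded_convex_hull)
  moreover have "1 / N \<le> g / N"
    using gw(1) \<open>0 < N\<close> by (simp add: divide_right_mono)
  ultimately show ?thesis
    using \<open>0 < N\<close> unfolding N_def by (simp add: divide_le_eq mult.commute)
qed

lemma lattice_diam_triangle_le:
  assumes "det2 (b - a) (c - a) \<noteq> 0" "0 \<le> D"
    and "\<And>z x y. primitive_vec z \<Longrightarrow> z = x *\<^sub>R (b - a) + y *\<^sub>R (c - a) \<Longrightarrow> 1 \<le> D * hexnorm x y"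
  shows "lattice_diam (convex hull {a, b, c}) \<le> D"
proof (rule lattice_diam_le)
  fix p q z t
  assume h: "p \<in> convex hull {a, b, c}" "q \<in> convex hull {a, b, c}" "primitive_vec z" "0 \<le> t"
    "q - p = t *\<^sub>R z"
  define x where "x = det2 z (c - a) / det2 (b - a) (c - a)"
  define y where "y = det2 (b - a) z / det2 (b - a) (c - a)"
  have z: "z = x *\<^sub>R (b - a) + y *\<^sub>R (c - a)"
    unfolding x_def y_def by (rule det2_decomposition[OF assms(1)])
  have "q - p = (t * x) *\<^sub>R (b - a) + (t * y) *\<^sub>R (c - a)"
    using h(5) z by (simp add: scaleR_add_right)
  then have "hexnorm (t * x) (t * y) \<le> 1"
    by (rule triangle_chord_hexnorm_le[OF assms(1) h(1,2)])
  then have "t * hexnorm x y \<le> 1"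
    using hexnorm_scale[of t x y] h(4) by simp
  have "t = t * 1"
    by simp
  also have "\<dots> \<le> t * (D * hexnorm x y)"
    using assms(3)[OF h(3) z] h(4) by (rule mult_left_mono)
  also have "\<dots> = D * (t * hexnorm x y)"
    by (simp add: algebra_simps)
  also have "\<dots> \<le> D * 1"
    using \<open>t * hexnorm x y \<le> 1\<close> assms(2) by (rule mult_left_mono)
  finally show "t \<le> D"
    by simp
qed simp

lemma lattice_diam_triangle_pos:
  assumes "\<not> collinear {a, b, c}"
  shows "0 < lattice_diam (convex hull {a, b, c})"
proof -
  have d: "det2 (b - a) (c - a) \<noteq> 0"
    using assms collinear_iff_det2 by blast
  define x where "x = det2 (1, 0) (c - a) / det2 (b - a) (c - a)"
  define y where "y = det2 (b - a) (1, 0) / det2 (b - a) (c - a)"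
  have "int_vec (1, 0)" "(1::real, 0::real) \<noteq> 0"
    by (auto simp: int_vec_def zero_prod_def)
  moreover have "(1, 0) = x *\<^sub>R (b - a) + y *\<^sub>R (c - a)"
    unfolding x_def y_def by (rule det2_decomposition[OF d])
  ultimately have "1 \<le> lattice_diam (convex hull {a, b, c}) * hexnorm x y"
    by (rule lattice_diam_triangle_ge)
  then show ?thesis
    using hexnorm_nonneg[of x y] mult_nonpos_nonneg[of _ "hexnorm x y"] by (meson not_le order_trans
        zero_less_one)
qed

lemma int_vec_eq_0_if_hexnorm_less_1:
  assumes "\<not> collinear {a, b, c}" "int_vec z"
    and "lattice_diam (convex hull {a, b, c}) *\<^sub>R z = X *\<^sub>R (b - a) + Y *\<^sub>R (c - a)"
    and "hexnorm X Y < 1"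
  shows "z = 0"
proof (rule ccontr)
  assume "z \<noteq> 0"
  define D where "D = lattice_diam (convex hull {a, b, c})"
  have "0 < D"
    unfolding D_def by (rule lattice_diam_triangle_pos[OF assms(1)])
  have "z = (X / D) *\<^sub>R (b - a) + (Y / D) *\<^sub>R (c - a)"
    using arg_cong[OF assms(3), of "\<lambda>w. (1 / D) *\<^sub>R w"] \<open>0 < D\<close> unfolding D_def
    by (simp add: scaleR_add_right)
  from lattice_diam_triangle_ge[OF assms(2) \<open>z \<noteq> 0\<close> this]
  have "1 \<le> D * hexnorm ((1 / D) * X) ((1 / D) * Y)"
    unfolding D_def by simp
  also have "\<dots> = hexnorm X Y"
    using \<open>0 < D\<close> by (simp only: hexnorm_scale) simp
  finally show False
    using assms(4) by simp
qed

lemma convex_combination_bounds: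
  fixes \<alpha> \<beta> :: real
  assumes "0 \<le> x" "0 \<le> y" "x + y \<le> 1"
  shows "min 0 (min \<alpha> \<beta>) \<le> x * \<alpha> + y * \<beta>" "x * \<alpha> + y * \<beta> \<le> max 0 (max \<alpha> \<beta>)"
proof -
  define m where "m = min 0 (min \<alpha> \<beta>)"
  define M where "M = max 0 (max \<alpha> \<beta>)"
  have "m \<le> 0" "m \<le> \<alpha>" "m \<le> \<beta>" "0 \<le> M" "\<alpha> \<le> M" "\<beta> \<le> M"
    unfolding m_def M_def by simp_all
  then have "x * m \<le> x * \<alpha>" "y * m \<le> y * \<beta>" "x * \<alpha> \<le> x * M" "y * \<beta> \<le> y * M"
    using assms(1,2) by (simp_all add: mult_left_mono)
  moreover have "m \<le> (x + y) * m" "(x + y) * M \<le> M"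
    using mult_left_le_one_le[of "- m" "x + y"] mult_left_le_one_le[of M "x + y"]
      assms \<open>m \<le> 0\<close> \<open>0 \<le> M\<close> by simp_all
  ultimately show "m \<le> x * \<alpha> + y * \<beta>" "x * \<alpha> + y * \<beta> \<le> M"
    by (simp_all add: distrib_right)
qed

lemma width_dir_triangle:
  "width_dir (convex hull {a, b, c}) y = hexnorm (y \<bullet> (b - a)) (y \<bullet> (a - c))"
proof (rule antisym)
  define \<alpha> \<beta> where "\<alpha> = y \<bullet> (b - a)" and "\<beta> = y \<bullet> (c - a)"
  have diff: "s - t \<le> hexnorm \<alpha> (- \<beta>)" if "s \<in> {0, \<alpha>, \<beta>}" "t \<in> {0, \<alpha>, \<beta>}" for s t
    using that unfolding hexnorm_def by (elim insertE; simp)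
  have "y \<bullet> (p - q) \<le> hexnorm \<alpha> (- \<beta>)"
    if pq: "p \<in> convex hull {a, b, c}" "q \<in> convex hull {a, b, c}" for p q
  proof -
    obtain x1 y1 where p: "0 \<le> x1" "0 \<le> y1" "x1 + y1 \<le> 1" "p = a + x1 *\<^sub>R (b - a) + y1 *\<^sub>R (c - a)"
      using pq(1) unfolding convex_hull_3_alt by blast
    obtain x2 y2 where q: "0 \<le> x2" "0 \<le> y2" "x2 + y2 \<le> 1" "q = a + x2 *\<^sub>R (b - a) + y2 *\<^sub>R (c - a)"
      using pq(2) unfolding convex_hull_3_alt by blast
    have "y \<bullet> (p - q) = (x1 * \<alpha> + y1 * \<beta>) - (x2 * \<alpha> + y2 * \<beta>)"
      unfolding p(4) q(4) \<alpha>_def \<beta>_def by (simp add: algebra_simps)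
    also have "\<dots> \<le> max 0 (max \<alpha> \<beta>) - min 0 (min \<alpha> \<beta>)"
      using convex_combination_bounds[OF p(1-3), of \<alpha> \<beta>] convex_combination_bounds[OF q(1-3), of \<alpha> \<beta>]
      by linarith
    also have "\<dots> \<le> hexnorm \<alpha> (- \<beta>)"
      by (rule diff) (simp_all add: max_def min_def)
    finally show ?thesis .
  qed
  moreover have "hexnorm \<alpha> (- \<beta>) = hexnorm (y \<bullet> (b - a)) (y \<bullet> (a - c))"
    unfolding \<alpha>_def \<beta>_def by (simp add: inner_diff_right)
  ultimately show "width_dir (convex hull {a, b, c}) y \<le> hexnorm (y \<bullet> (b - a)) (y \<bullet> (a - c))"
    by (intro width_dir_le) auto
next
  have B: "bounded (convex hull {a, b, c})"
    by (simp add: finite_imp_bounded_convex_hull)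
  have V: "a \<in> convex hull {a, b, c}" "b \<in> convex hull {a, b, c}" "c \<in> convex hull {a, b, c}"
    by (simp_all add: hull_inc)
  show "hexnorm (y \<bullet> (b - a)) (y \<bullet> (a - c)) \<le> width_dir (convex hull {a, b, c}) y"
    using inner_diff_le_width_dir[OF B V(1) V(2), of y] inner_diff_le_width_dir[OF B V(2) V(1), of y]
      inner_diff_le_width_dir[OF B V(1) V(3), of y] inner_diff_le_width_dir[OF B V(3) V(1), of y]
      inner_diff_le_width_dir[OF B V(2) V(3), of y] inner_diff_le_width_dir[OF B V(3) V(2), of y]
    unfolding hexnorm_le_iff abs_le_iff inner_diff_right by (intro conjI; linarith)
qed

section \<open>Triangles with lattice cevians\<close>

lemma sq_sub_self_add_one_pos: "0 < l * l - l + (1::real)"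
proof -
  have "l * l - l + 1 = (l - 1/2)\<^sup>2 + 3/4"
    by (simp add: power2_eq_square algebra_simps)
  moreover have "0 \<le> (l - 1/2)\<^sup>2"
    by simp
  ultimately show ?thesis
    by linarith
qed

text \<open>The number \<open>D\<close> turns out to be the lattice
  diameter, and \<open>D / (l\<^sup>2 - l + 1)\<close> the lattice width.\<close>

definition lattice_cevians ::
  "real \<times> real \<Rightarrow> real \<times> real \<Rightarrow> real \<times> real \<Rightarrow>
   real \<times> real \<Rightarrow> real \<times> real \<Rightarrow> real \<times> real \<Rightarrow> real \<Rightarrow> real \<Rightarrow> bool" where
  "lattice_cevians a b c za zb zc l D \<longleftrightarrow>
     unimodular_pair za zb \<and> za + zb + zc = 0 \<and> 0 < l \<and> l < 1 \<and> 0 < D \<and>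
     a + D *\<^sub>R za = l *\<^sub>R b + (1 - l) *\<^sub>R c \<and>
     b + D *\<^sub>R zb = l *\<^sub>R c + (1 - l) *\<^sub>R a \<and>
     c + D *\<^sub>R zc = l *\<^sub>R a + (1 - l) *\<^sub>R b"

lemma lattice_ceviansD:
  assumes "lattice_cevians a b c za zb zc l D"
  shows "unimodular_pair za zb" "0 < l" "l < 1" "0 < D"
  using assms unfolding lattice_cevians_def by auto

lemma lattice_cevians_rotate:
  assumes "lattice_cevians a b c za zb zc l D"
  shows "lattice_cevians b c a zb zc za l D"
proof -
  have zc: "zc = - za - zb"
    using assms unfolding lattice_cevians_def by (simp add: algebra_simps eq_neg_iff_add_eq_0)
  have "det2 zb zc = det2 za zb" "int_vec zc"
    using assms unfolding zc lattice_cevians_def unimodular_pair_def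
    by (auto simp: det2_def algebra_simps intro: int_vec_diff int_vec_minus)
  then show ?thesis
    using assms unfolding lattice_cevians_def unimodular_pair_def by (auto simp: algebra_simps)
qed

lemma lattice_cevians_reflect:
  assumes "lattice_cevians a b c za zb zc l D"
  shows "lattice_cevians a c b za zc zb (1 - l) D"
proof -
  have zc: "zc = - za - zb"
    using assms unfolding lattice_cevians_def by (simp add: algebra_simps eq_neg_iff_add_eq_0)
  have "det2 za zc = - det2 za zb" "int_vec zc"
    using assms unfolding zc lattice_cevians_def unimodular_pair_def
    by (auto simp: det2_def algebra_simps intro: int_vec_diff int_vec_minus)
  then show ?thesis
    using assms unfolding lattice_cevians_def unimodular_pair_def by (auto simp: algebra_simps)
qed

lemma lattice_cevians_vectors:
  assumes "lattice_cevians a b c za zb zc l D"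
  shows "D *\<^sub>R za = l *\<^sub>R (b - a) + (1 - l) *\<^sub>R (c - a)"
    and "D *\<^sub>R zb = l *\<^sub>R (c - a) - (b - a)"
proof -
  have "a + D *\<^sub>R za = l *\<^sub>R b + (1 - l) *\<^sub>R c" "b + D *\<^sub>R zb = l *\<^sub>R c + (1 - l) *\<^sub>R a"
    using assms unfolding lattice_cevians_def by auto
  then show "D *\<^sub>R za = l *\<^sub>R (b - a) + (1 - l) *\<^sub>R (c - a)" "D *\<^sub>R zb = l *\<^sub>R (c - a) - (b - a)"
    by (simp_all add: algebra_simps)
qed

lemma lattice_cevians_edges:
  assumes "lattice_cevians a b c za zb zc l D"
  shows "(l * l - l + 1) *\<^sub>R (b - a) = D *\<^sub>R (l *\<^sub>R za + (l - 1) *\<^sub>R zb)"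
    and "(l * l - l + 1) *\<^sub>R (c - a) = D *\<^sub>R (za + l *\<^sub>R zb)"
proof -
  note sides = lattice_cevians_vectors[OF assms]
  have "D *\<^sub>R (l *\<^sub>R za + (l - 1) *\<^sub>R zb) = l *\<^sub>R (D *\<^sub>R za) + (l - 1) *\<^sub>R (D *\<^sub>R zb)"
    "D *\<^sub>R (za + l *\<^sub>R zb) = D *\<^sub>R za + l *\<^sub>R (D *\<^sub>R zb)"
    by (simp_all add: algebra_simps)
  then show "(l * l - l + 1) *\<^sub>R (b - a) = D *\<^sub>R (l *\<^sub>R za + (l - 1) *\<^sub>R zb)"
    "(l * l - l + 1) *\<^sub>R (c - a) = D *\<^sub>R (za + l *\<^sub>R zb)"
    unfolding sides by (simp_all add: prod_eq_iff algebra_simps)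
qed

lemma det2_cevian_sides:
  assumes "D *\<^sub>R za = l *\<^sub>R u + (1 - l) *\<^sub>R v" "D *\<^sub>R zb = l *\<^sub>R v - u"
  shows "D\<^sup>2 * det2 za zb = (l * l - l + 1) * det2 u v"
proof -
  have "D\<^sup>2 * det2 za zb = det2 (D *\<^sub>R za) (D *\<^sub>R zb)"
    by (simp add: det2_bilinear power2_eq_square)
  also have "\<dots> = (l * l - l + 1) * det2 u v"
    unfolding assms by (simp add: det2_def algebra_simps)
  finally show ?thesis .
qed

lemma lattice_cevians_noncollinear:
  assumes "lattice_cevians a b c za zb zc l D"
  shows "\<not> collinear {a, b, c}"
proof -
  have "det2 za zb \<noteq> 0" "D \<noteq> 0"
    using lattice_ceviansD[OF assms] unfolding unimodular_pair_def by auto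
  then show ?thesis
    using det2_cevian_sides[OF lattice_cevians_vectors[OF assms]] unfolding collinear_iff_det2 by auto
qed

lemma lattice_cevians_primitive_hexnorm:
  assumes "lattice_cevians a b c za zb zc l D" "primitive_vec z"
    and "z = x *\<^sub>R (b - a) + y *\<^sub>R (c - a)"
  shows "1 \<le> D * hexnorm x y"
proof -
  note cev = lattice_ceviansD[OF assms(1)]
  have det: "det2 (b - a) (c - a) \<noteq> 0"
    using lattice_cevians_noncollinear[OF assms(1)] collinear_iff_det2 by blast
  obtain m n where mn: "m \<in> \<int>" "n \<in> \<int>" "z = m *\<^sub>R za + n *\<^sub>R zb"
    using unimodular_pair_int_coords[OF cev(1) primitive_vec_imp_int_vec[OF assms(2)]] by blast
  obtain i j where ij: "m = of_int i" "n = of_int j"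
    using mn(1,2) Ints_cases by metis
  have "i \<noteq> 0 \<or> j \<noteq> 0"
    using primitive_vec_nonzero[OF assms(2)] mn(3) ij by auto
  then have "1 \<le> hexnorm (m * l - n) (m * (1 - l) + n * l)"
    unfolding ij using cev(2,3) by (rule hexnorm_int_combination_ge_1)
  moreover have "(D * x) *\<^sub>R (b - a) + (D * y) *\<^sub>R (c - a)
      = (m * l - n) *\<^sub>R (b - a) + (m * (1 - l) + n * l) *\<^sub>R (c - a)"
  proof -
    have "(D * x) *\<^sub>R (b - a) + (D * y) *\<^sub>R (c - a) = D *\<^sub>R z"
      using assms(3) by (simp add: scaleR_add_right)
    also have "\<dots> = m *\<^sub>R (D *\<^sub>R za) + n *\<^sub>R (D *\<^sub>R zb)"
      using mn(3) by (simp add: algebra_simps)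
    also have "\<dots> = (m * l - n) *\<^sub>R (b - a) + (m * (1 - l) + n * l) *\<^sub>R (c - a)"
      unfolding lattice_cevians_vectors[OF assms(1)] by (simp add: algebra_simps)
    finally show ?thesis .
  qed
  then have "D * x = m * l - n" "D * y = m * (1 - l) + n * l"
    using det2_coords_unique[OF det] by blast+
  ultimately show ?thesis
    using hexnorm_scale[of D x y] cev(4) by simp
qed

lemma lattice_cevians_lattice_diam:
  assumes "lattice_cevians a b c za zb zc l D"
  shows "lattice_diam (convex hull {a, b, c}) = D"
proof (rule antisym)
  note cev = lattice_ceviansD[OF assms]
  have "det2 (b - a) (c - a) \<noteq> 0"
    using lattice_cevians_noncollinear[OF assms] collinear_iff_det2 by blast
  then show "lattice_diam (convex hull {a, b, c}) \<le> D"
    using cev(4) lattice_cevians_primitive_hexnorm[OF assms]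
    by (intro lattice_diam_triangle_le) auto
  have "l *\<^sub>R b + (1 - l) *\<^sub>R c \<in> convex hull {a, b, c}"
    using cev(2,3) by (intro convexD) (auto intro: hull_inc)
  then have "a + D *\<^sub>R za \<in> convex hull {a, b, c}"
    using assms unfolding lattice_cevians_def by simp
  then show "D \<le> lattice_diam (convex hull {a, b, c})"
    using cev(4) unimodular_pair_primitive[OF cev(1)]
    by (intro lattice_length_le_lattice_diam[of _ a "a + D *\<^sub>R za" za])
      (auto simp: finite_imp_bounded_convex_hull hull_inc)
qed

lemma lattice_cevians_width_dir:
  assumes "lattice_cevians a b c za zb zc l D"
  shows "(l * l - l + 1) * width_dir (convex hull {a, b, c}) y
    = D * hexnorm (l * (y \<bullet> za) + (l - 1) * (y \<bullet> zb)) (- (y \<bullet> za + l * (y \<bullet> zb)))"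
proof -
  define k where "k = l * l - l + 1"
  have "0 < k"
    unfolding k_def by (rule sq_sub_self_add_one_pos)
  have "k * (y \<bullet> (b - a)) = D * (l * (y \<bullet> za) + (l - 1) * (y \<bullet> zb))"
    using arg_cong[OF lattice_cevians_edges(1)[OF assms], of "inner y"]
    unfolding k_def by (simp add: inner_add_right)
  moreover have "k * (y \<bullet> (a - c)) = D * (- (y \<bullet> za + l * (y \<bullet> zb)))"
    using arg_cong[OF lattice_cevians_edges(2)[OF assms], of "inner y"]
    unfolding k_def by (simp add: inner_add_right inner_diff_right algebra_simps)
  ultimately show ?thesis
    using hexnorm_scale[of k "y \<bullet> (b - a)" "y \<bullet> (a - c)"] \<open>0 < k\<close> lattice_ceviansD(4)[OF assms]
    unfolding width_dir_triangle k_def by (simp add: hexnorm_scale)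
qed

lemma lattice_cevians_width_dir_ge:
  assumes "lattice_cevians a b c za zb zc l D" "int_vec y" "y \<noteq> 0"
  shows "D \<le> (l * l - l + 1) * width_dir (convex hull {a, b, c}) y"
proof -
  note cev = lattice_ceviansD[OF assms(1)]
  obtain i j where ij: "y \<bullet> za = of_int i" "y \<bullet> zb = of_int j"
    using int_vec_inner_Ints[OF assms(2)] cev(1) unfolding unimodular_pair_def by (metis Ints_cases)
  have "det2 za zb \<noteq> 0"
    using cev(1) unfolding unimodular_pair_def by auto
  then have "i \<noteq> 0 \<or> j \<noteq> 0"
    using inner_eq_0_basis_imp_eq_0[of za zb y] assms(3) ij by auto
  then have "1 \<le> hexnorm (of_int j * l - of_int (- i)) (of_int j * (1 - l) + of_int (- i) * l)"
    using cev(2,3) by (intro hexnorm_int_combination_ge_1) auto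
  also have "\<dots> = hexnorm (- (- (of_int i + l * of_int j))) (- (l * of_int i + (l - 1) * of_int j))"
    by (simp add: algebra_simps)
  also have "\<dots> = hexnorm (l * of_int i + (l - 1) * of_int j) (- (of_int i + l * of_int j))"
    unfolding hexnorm_uminus by (rule hexnorm_commute)
  finally show ?thesis
    using lattice_cevians_width_dir[OF assms(1), of y] cev(4) ij by (simp add: mult_le_cancel_left1)
qed

lemma lattice_cevians_lattice_width:
  assumes "lattice_cevians a b c za zb zc l D"
  shows "lattice_width (convex hull {a, b, c}) = D / (l * l - l + 1)"
proof (rule antisym)
  note cev = lattice_ceviansD[OF assms]
  define k where "k = l * l - l + 1"
  have "0 < k"
    unfolding k_def by (rule sq_sub_self_add_one_pos)
  obtain y0 where y0: "int_vec y0" "y0 \<bullet> za = 1" "y0 \<bullet> zb = 0"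
    using unimodular_pair_dual[OF cev(1)] .
  have "hexnorm l (- 1) = 1"
    using cev(2,3) unfolding hexnorm_def by auto
  then have "k * width_dir (convex hull {a, b, c}) y0 = D"
    using lattice_cevians_width_dir[OF assms, of y0] y0(2,3) unfolding k_def by simp
  moreover have "lattice_width (convex hull {a, b, c}) \<le> width_dir (convex hull {a, b, c}) y0"
    using y0 by (intro lattice_width_le_width_dir) (auto simp: finite_imp_bounded_convex_hull)
  ultimately have "k * lattice_width (convex hull {a, b, c}) \<le> D"
    using \<open>0 < k\<close> by (metis mult_left_mono less_imp_le)
  then show "lattice_width (convex hull {a, b, c}) \<le> D / (l * l - l + 1)"
    using \<open>0 < k\<close> unfolding k_def[symmetric] by (simp add: le_divide_eq mult.commute)
  show "D / (l * l - l + 1) \<le> lattice_width (convex hull {a, b, c})"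
    using lattice_cevians_width_dir_ge[OF assms] \<open>0 < k\<close> unfolding k_def[symmetric]
    by (intro lattice_width_ge) (simp add: divide_le_eq mult.commute)
qed

lemma lattice_cevians_dual_bounds:
  assumes "lattice_cevians a b c za zb zc l D" "y0 \<bullet> za = 1" "y0 \<bullet> zb = 0"
    and "w \<in> convex hull {a, b, c}"
  shows "y0 \<bullet> (w - a) \<le> D / (l * l - l + 1)" and "w \<noteq> a \<Longrightarrow> 0 < y0 \<bullet> (w - a)"
proof -
  note cev = lattice_ceviansD[OF assms(1)]
  define k where "k = l * l - l + 1"
  have "0 < k"
    unfolding k_def by (rule sq_sub_self_add_one_pos)
  obtain x y where xy: "0 \<le> x" "0 \<le> y" "x + y \<le> 1" "w = a + x *\<^sub>R (b - a) + y *\<^sub>R (c - a)"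
    using assms(4) unfolding convex_hull_3_alt by blast
  define \<beta> \<gamma> where "\<beta> = y0 \<bullet> (b - a)" and "\<gamma> = y0 \<bullet> (c - a)"
  have k\<beta>: "k * \<beta> = D * l" and k\<gamma>: "k * \<gamma> = D"
    using arg_cong[OF lattice_cevians_edges(1)[OF assms(1)], of "inner y0"]
      arg_cong[OF lattice_cevians_edges(2)[OF assms(1)], of "inner y0"] assms(2,3)
    unfolding k_def \<beta>_def \<gamma>_def by (simp_all add: inner_add_right)
  have "y0 \<bullet> (w - a) = x * \<beta> + y * \<gamma>"
    unfolding xy(4) \<beta>_def \<gamma>_def by (simp add: inner_add_right)
  then have "k * (y0 \<bullet> (w - a)) = x * (k * \<beta>) + y * (k * \<gamma>)"
    by (simp add: algebra_simps)
  also have "\<dots> = D * (l * x + y)"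
    unfolding k\<beta> k\<gamma> by (simp add: algebra_simps)
  finally have val: "k * (y0 \<bullet> (w - a)) = D * (l * x + y)" .
  have "l * x \<le> x"
    using xy(1) cev(2,3) by (simp add: mult_left_le_one_le)
  then have "D * (l * x + y) \<le> D"
    using xy cev(2,4) by (simp add: mult_left_le)
  then show "y0 \<bullet> (w - a) \<le> D / (l * l - l + 1)"
    using val \<open>0 < k\<close> unfolding k_def[symmetric] by (simp add: le_divide_eq mult.commute)
  show "0 < y0 \<bullet> (w - a)" if "w \<noteq> a"
  proof -
    have "x \<noteq> 0 \<or> y \<noteq> 0"
      using that xy(4) by auto
    then have "0 < l * x + y"
      using xy(1,2) cev(2) by (auto simp: add_pos_nonneg add_nonneg_pos)
    then have "0 < k * (y0 \<bullet> (w - a))"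
      using val cev(4) by simp
    then show ?thesis
      using \<open>0 < k\<close> by (simp add: zero_less_mult_iff)
  qed
qed

lemma lattice_cevians_width_less:
  assumes "lattice_cevians a b c za zb zc l D" "compact K" "K \<noteq> {}" "K \<subseteq> convex hull {a, b, c}"
    and "a \<notin> K"
  shows "lattice_width K < D / (l * l - l + 1)"
proof -
  obtain y0 where y0: "int_vec y0" "y0 \<bullet> za = 1" "y0 \<bullet> zb = 0"
    using unimodular_pair_dual[OF lattice_ceviansD(1)[OF assms(1)]] .
  note bounds = lattice_cevians_dual_bounds[OF assms(1) y0(2,3)]
  have "continuous_on K (\<lambda>w. y0 \<bullet> w)"
    by (intro continuous_intros)
  then obtain w1 where w1: "w1 \<in> K" "\<And>w. w \<in> K \<Longrightarrow> y0 \<bullet> w1 \<le> y0 \<bullet> w"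
    using continuous_attains_inf[OF assms(2,3)] by blast
  have "0 < y0 \<bullet> (w1 - a)"
    using bounds(2) w1(1) assms(4,5) by blast
  have "width_dir K (- y0) \<le> D / (l * l - l + 1) - y0 \<bullet> (w1 - a)"
  proof (rule width_dir_le[OF assms(3)])
    fix p q
    assume pq: "p \<in> K" "q \<in> K"
    have "y0 \<bullet> (q - a) \<le> D / (l * l - l + 1)" "y0 \<bullet> w1 \<le> y0 \<bullet> p"
      using bounds(1) w1(2) pq assms(4) by blast+
    then show "- y0 \<bullet> (p - q) \<le> D / (l * l - l + 1) - y0 \<bullet> (w1 - a)"
      by (simp add: inner_diff_right)
  qed
  moreover have "lattice_width K \<le> width_dir K (- y0)"
    using y0 assms(2,3) by (intro lattice_width_le_width_dir int_vec_minus) (auto simp: compact_imp_bounded)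
  ultimately show ?thesis
    using \<open>0 < y0 \<bullet> (w1 - a)\<close> by linarith
qed

lemma lattice_cevians_reduced:
  assumes "lattice_cevians a b c za zb zc l D"
  shows "lattice_reduced (convex hull {a, b, c})"
  unfolding lattice_reduced_def
proof (intro conjI allI impI)
  show "convex_body (convex hull {a, b, c})"
    by (rule convex_body_triangle[OF lattice_cevians_noncollinear[OF assms]])
  fix C
  assume C: "convex_body C \<and> C \<subset> convex hull {a, b, c}"
  then have C': "compact C" "convex C" "C \<noteq> {}" "C \<subseteq> convex hull {a, b, c}"
    unfolding convex_body_def using interior_subset by auto
  have "\<not> {a, b, c} \<subseteq> C"
    using C C'(2) hull_minimal[of "{a, b, c}" C convex] by auto
  then consider "a \<notin> C" | "b \<notin> C" | "c \<notin> C"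
    by auto
  then have "lattice_width C < D / (l * l - l + 1)"
  proof cases
    case 1
    then show ?thesis
      by (rule lattice_cevians_width_less[OF assms C'(1,3,4)])
  next
    case 2
    have "C \<subseteq> convex hull {b, c, a}"
      using C'(4) by (simp add: insert_commute)
    then show ?thesis
      by (rule lattice_cevians_width_less[OF lattice_cevians_rotate[OF assms] C'(1,3) _ 2])
  next
    case 3
    have "C \<subseteq> convex hull {c, a, b}"
      using C'(4) by (simp add: insert_commute)
    then show ?thesis
      by (rule lattice_cevians_width_less[OF lattice_cevians_rotate[OF lattice_cevians_rotate[OF assms]]
            C'(1,3) _ 3])
  qed
  then show "lattice_width C \<noteq> lattice_width (convex hull {a, b, c})"
    using lattice_cevians_lattice_width[OF assms] by simp
qed

lemma cevian_extension_in_convex_hull: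
  fixes a b c p :: "'a::real_vector"
  assumes "0 < l" "l < 1" "p = a + x *\<^sub>R (b - a) + y *\<^sub>R (c - a)" "1 < x + y"
  obtains \<epsilon> where "0 < \<epsilon>"
    "a + (1 + \<epsilon>) *\<^sub>R (l *\<^sub>R (b - a) + (1 - l) *\<^sub>R (c - a)) \<in> convex hull {b, c, p}"
proof -
  define \<delta> where "\<delta> = x + y - 1"
  define A where "A = \<bar>\<delta> * l - x\<bar>"
  define B where "B = \<bar>\<delta> * (1 - l) - y\<bar>"
  define m where "m = min l (1 - l)"
  define \<gamma> where "\<gamma> = m / (1 + A + B)"
  have "0 < m" "0 \<le> A" "0 \<le> B" "0 < \<delta>"
    using assms unfolding m_def A_def B_def \<delta>_def by auto
  then have "0 < \<gamma>" "\<gamma> * (1 + A + B) = m"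
    unfolding \<gamma>_def by auto
  then have "\<gamma> * A \<le> m" "\<gamma> * B \<le> m"
    using \<open>0 \<le> A\<close> \<open>0 \<le> B\<close> mult_left_mono[of A "1 + A + B" \<gamma>] mult_left_mono[of B "1 + A + B" \<gamma>]
    by auto
  define \<alpha> where "\<alpha> = l + \<gamma> * (\<delta> * l - x)"
  define \<beta> where "\<beta> = (1 - l) + \<gamma> * (\<delta> * (1 - l) - y)"
  have "- A \<le> \<delta> * l - x" "- B \<le> \<delta> * (1 - l) - y"
    unfolding A_def B_def by arith+
  then have "\<gamma> * (- A) \<le> \<gamma> * (\<delta> * l - x)" "\<gamma> * (- B) \<le> \<gamma> * (\<delta> * (1 - l) - y)"
    using \<open>0 < \<gamma>\<close> by (simp_all only: mult_left_mono less_imp_le)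
  then have "0 \<le> \<alpha>" "0 \<le> \<beta>"
    using \<open>\<gamma> * A \<le> m\<close> \<open>\<gamma> * B \<le> m\<close> unfolding \<alpha>_def \<beta>_def m_def by auto
  have sum: "\<alpha> + \<beta> + \<gamma> = 1"
    unfolding \<alpha>_def \<beta>_def \<delta>_def by (simp add: algebra_simps)
  have "\<alpha> *\<^sub>R b + \<beta> *\<^sub>R c + \<gamma> *\<^sub>R p
      = (\<alpha> + \<beta> + \<gamma>) *\<^sub>R a + (\<alpha> + \<gamma> * x) *\<^sub>R (b - a) + (\<beta> + \<gamma> * y) *\<^sub>R (c - a)"
    unfolding assms(3) by (simp add: algebra_simps)
  also have "\<dots> = a + (1 + \<gamma> * \<delta>) *\<^sub>R (l *\<^sub>R (b - a) + (1 - l) *\<^sub>R (c - a))"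
    unfolding sum \<alpha>_def \<beta>_def \<delta>_def by (simp add: algebra_simps)
  finally have eq: "\<alpha> *\<^sub>R b + \<beta> *\<^sub>R c + \<gamma> *\<^sub>R p
      = a + (1 + \<gamma> * \<delta>) *\<^sub>R (l *\<^sub>R (b - a) + (1 - l) *\<^sub>R (c - a))" .
  have "\<alpha> *\<^sub>R b + \<beta> *\<^sub>R c + \<gamma> *\<^sub>R p \<in> convex hull {b, c, p}"
    using \<open>0 \<le> \<alpha>\<close> \<open>0 \<le> \<beta>\<close> \<open>0 < \<gamma>\<close> sum unfolding convex_hull_3 by fastforce
  then have "a + (1 + \<gamma> * \<delta>) *\<^sub>R (l *\<^sub>R (b - a) + (1 - l) *\<^sub>R (c - a)) \<in> convex hull {b, c, p}"
    unfolding eq .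
  moreover have "0 < \<gamma> * \<delta>"
    using \<open>0 < \<gamma>\<close> \<open>0 < \<delta>\<close> by simp
  ultimately show ?thesis
    using that by blast
qed

lemma lattice_cevians_lattice_diam_less:
  assumes "lattice_cevians a b c za zb zc l D" "convex C" "bounded C" "convex hull {a, b, c} \<subseteq> C"
    and "p \<in> C" "p = a + x *\<^sub>R (b - a) + y *\<^sub>R (c - a)" "1 < x + y"
  shows "D < lattice_diam C"
proof -
  note cev = lattice_ceviansD[OF assms(1)]
  obtain \<epsilon> where \<epsilon>: "0 < \<epsilon>"
    "a + (1 + \<epsilon>) *\<^sub>R (l *\<^sub>R (b - a) + (1 - l) *\<^sub>R (c - a)) \<in> convex hull {b, c, p}"
    using cevian_extension_in_convex_hull[OF cev(2,3) assms(6,7)] .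
  have "convex hull {b, c, p} \<subseteq> C"
    using assms(2,4,5) by (intro hull_minimal) (auto intro: hull_inc)
  then have "a + ((1 + \<epsilon>) * D) *\<^sub>R za \<in> C"
    using \<epsilon>(2) unfolding lattice_cevians_vectors(1)[OF assms(1), symmetric] by auto
  moreover have "a \<in> C"
    using assms(4) hull_inc[of a "{a, b, c}"] by auto
  ultimately have "(1 + \<epsilon>) * D \<le> lattice_diam C"
    using unimodular_pair_primitive[OF cev(1)] cev(4) \<epsilon>(1)
    by (intro lattice_length_le_lattice_diam[OF assms(3), of a "a + ((1 + \<epsilon>) * D) *\<^sub>R za" za]) auto
  moreover have "D < (1 + \<epsilon>) * D"
    using \<epsilon>(1) cev(4) by simp
  ultimately show ?thesis
    by linarith
qed

lemma outside_triangle_beyond_side: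
  fixes a b c p :: "real \<times> real"
  assumes "\<not> collinear {a, b, c}" "p \<notin> convex hull {a, b, c}"
  obtains x y where "p = a + x *\<^sub>R (b - a) + y *\<^sub>R (c - a)" "1 < x + y"
    | x y where "p = b + x *\<^sub>R (c - b) + y *\<^sub>R (a - b)" "1 < x + y"
    | x y where "p = c + x *\<^sub>R (a - c) + y *\<^sub>R (b - c)" "1 < x + y"
proof -
  have det: "det2 (b - a) (c - a) \<noteq> 0"
    using assms(1) collinear_iff_det2 by blast
  define x where "x = det2 (p - a) (c - a) / det2 (b - a) (c - a)"
  define y where "y = det2 (b - a) (p - a) / det2 (b - a) (c - a)"
  have p: "p = a + x *\<^sub>R (b - a) + y *\<^sub>R (c - a)"
    using det2_decomposition[OF det, of "p - a"] unfolding x_def y_def by (simp add: algebra_simps)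
  then have "\<not> (0 \<le> x \<and> 0 \<le> y \<and> x + y \<le> 1)"
    using assms(2) unfolding convex_hull_3_alt by blast
  then consider "1 < x + y" | "1 < y + (1 - x - y)" | "1 < (1 - x - y) + x"
    by linarith
  moreover have "p = b + y *\<^sub>R (c - b) + (1 - x - y) *\<^sub>R (a - b)"
    "p = c + (1 - x - y) *\<^sub>R (a - c) + x *\<^sub>R (b - c)"
    unfolding p by (simp_all add: prod_eq_iff algebra_simps)
  ultimately show ?thesis
    using that(1)[OF p] that(2,3) by blast
qed

lemma lattice_cevians_complete:
  assumes "lattice_cevians a b c za zb zc l D"
  shows "lattice_complete (convex hull {a, b, c})"
  unfolding lattice_complete_def
proof (intro conjI allI impI)
  have nc: "\<not> collinear {a, b, c}"
    by (rule lattice_cevians_noncollinear[OF assms])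
  show "convex_body (convex hull {a, b, c})"
    by (rule convex_body_triangle[OF nc])
  fix C
  assume C: "convex_body C \<and> convex hull {a, b, c} \<subset> C"
  then have C': "convex C" "bounded C" "convex hull {a, b, c} \<subseteq> C"
    "convex hull {b, c, a} \<subseteq> C" "convex hull {c, a, b} \<subseteq> C"
    unfolding convex_body_def using compact_imp_bounded by (auto simp: insert_commute)
  obtain p where p: "p \<in> C" "p \<notin> convex hull {a, b, c}"
    using C by auto
  from outside_triangle_beyond_side[OF nc p(2)] have "D < lattice_diam C"
  proof cases
    case 1
    then show ?thesis
      by (rule lattice_cevians_lattice_diam_less[OF assms C'(1-3) p(1)])
  next
    case 2
    then show ?thesis
      by (rule lattice_cevians_lattice_diam_less[OF lattice_cevians_rotate[OF assms] C'(1,2,4) p(1)])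
  next
    case 3
    then show ?thesis
      by (rule lattice_cevians_lattice_diam_less[OF lattice_cevians_rotate[OF
            lattice_cevians_rotate[OF assms]] C'(1,2,5) p(1)])
  qed
  then show "lattice_diam C \<noteq> lattice_diam (convex hull {a, b, c})"
    using lattice_cevians_lattice_diam[OF assms] by simp
qed

section \<open>The normal form \<open>T_tri\<close>\<close>

lemma linear_unimod_map: "linear (unimod_map a b c d)"
  unfolding Real_Vector_Spaces.linear_iff unimod_map_def by (auto simp: algebra_simps)

lemma int_vec_unimod_map: "int_vec z \<Longrightarrow> int_vec (unimod_map a b c d z)"
  unfolding int_vec_def unimod_map_def by auto

lemma det2_unimod_map:
  "det2 (unimod_map a b c d p) (unimod_map a b c d q) = of_int (a * d - b * c) * det2 p q"
  unfolding det2_def unimod_map_def by (simp add: algebra_simps)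

lemma convex_hull_3_affine_image:
  "(\<lambda>z. r *\<^sub>R unimod_map a b c d z + t) ` (convex hull {A, B, C})
    = convex hull {r *\<^sub>R unimod_map a b c d A + t, r *\<^sub>R unimod_map a b c d B + t,
                   r *\<^sub>R unimod_map a b c d C + t}"
proof -
  let ?L = "\<lambda>z. r *\<^sub>R unimod_map a b c d z"
  have "linear ?L"
    using linear_unimod_map by (rule linear_compose_scale_right)
  have "(\<lambda>z. ?L z + t) ` (convex hull {A, B, C}) = (\<lambda>z. t + z) ` (?L ` (convex hull {A, B, C}))"
    by (auto simp: image_image add.commute)
  also have "\<dots> = (\<lambda>z. t + z) ` (convex hull (?L ` {A, B, C}))"
    by (simp add: convex_hull_linear_image[OF \<open>linear ?L\<close>])
  also have "\<dots> = convex hull ((\<lambda>z. t + z) ` ?L ` {A, B, C})"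
    by (rule convex_hull_translation[symmetric])
  finally show ?thesis
    by (simp add: add.commute)
qed

lemma lattice_cevians_affine_image:
  assumes "lattice_cevians A B C za zb zc l D" "0 < r" "\<bar>a * d - b * c\<bar> = 1"
  shows "lattice_cevians
    (r *\<^sub>R unimod_map a b c d A + t) (r *\<^sub>R unimod_map a b c d B + t) (r *\<^sub>R unimod_map a b c d C + t)
    (unimod_map a b c d za) (unimod_map a b c d zb) (unimod_map a b c d zc) l (r * D)"
proof -
  let ?U = "unimod_map a b c d"
  interpret U: linear ?U
    by (rule linear_unimod_map)
  have "\<bar>real_of_int (a * d - b * c)\<bar> = 1"
    using assms(3) by (metis of_int_1 of_int_abs)
  then have "unimodular_pair (?U za) (?U zb)"
    using lattice_ceviansD(1)[OF assms(1)] int_vec_unimod_map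
    unfolding unimodular_pair_def det2_unimod_map abs_mult by simp
  moreover have "?U za + ?U zb + ?U zc = 0"
    using assms(1) unfolding lattice_cevians_def by (metis U.add U.zero)
  moreover have "(r *\<^sub>R ?U P + t) + (r * D) *\<^sub>R ?U z = l *\<^sub>R (r *\<^sub>R ?U Q + t) + (1 - l) *\<^sub>R (r *\<^sub>R ?U R + t)"
    if "P + D *\<^sub>R z = l *\<^sub>R Q + (1 - l) *\<^sub>R R" for P Q R z
  proof -
    have h: "?U P + D *\<^sub>R ?U z = l *\<^sub>R ?U Q + (1 - l) *\<^sub>R ?U R"
      using arg_cong[OF that, of ?U] by (simp add: U.add U.scale)
    have "(r *\<^sub>R ?U P + t) + (r * D) *\<^sub>R ?U z = r *\<^sub>R (?U P + D *\<^sub>R ?U z) + t"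
      by (simp add: algebra_simps)
    also have "\<dots> = l *\<^sub>R (r *\<^sub>R ?U Q + t) + (1 - l) *\<^sub>R (r *\<^sub>R ?U R + t)"
      unfolding h by (simp add: algebra_simps)
    finally show ?thesis .
  qed
  ultimately show ?thesis
    using assms(1,2) unfolding lattice_cevians_def by auto
qed

lemma lattice_cevians_T_tri:
  assumes "0 \<le> x" "x < 1"
  shows "lattice_cevians (-1, -1) (x, 1) (1, - x) (1, 1) (0, -1) (-1, 0) ((1 + x) / 2) ((3 + x * x) / 2)"
proof -
  have "0 < 3 + x * x"
    by (simp add: add_pos_nonneg)
  then show ?thesis
    using assms unfolding lattice_cevians_def unimodular_pair_def int_vec_def det2_def
    by (simp add: zero_prod_def field_simps)
qed

lemma lattice_cevians_unique:
  assumes "lattice_cevians a b c za zb zc l D" "lattice_cevians a b' c' za zb zc' l D"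
  shows "b' = b" "c' = c"
proof -
  have "l * l - l + 1 \<noteq> 0"
    using sq_sub_self_add_one_pos[of l] by simp
  moreover have "(l * l - l + 1) *\<^sub>R (b' - a) = (l * l - l + 1) *\<^sub>R (b - a)"
    "(l * l - l + 1) *\<^sub>R (c' - a) = (l * l - l + 1) *\<^sub>R (c - a)"
    using lattice_cevians_edges[OF assms(1)] lattice_cevians_edges[OF assms(2)] by simp_all
  ultimately show "b' = b" "c' = c"
    by simp_all
qed

lemma lattice_equiv_T_tri_imp_lattice_cevians:
  assumes "0 \<le> x" "x < 1" "lattice_equiv (T_tri x) T"
  obtains a b c za zb zc l D where "lattice_cevians a b c za zb zc l D" "T = convex hull {a, b, c}"
proof -
  obtain r a0 b0 c0 d0 t where h: "0 < r" "\<bar>a0 * d0 - b0 * c0\<bar> = 1"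
    "T = (\<lambda>z. r *\<^sub>R unimod_map a0 b0 c0 d0 z + t) ` T_tri x"
    using assms(3) unfolding lattice_equiv_def by blast
  show ?thesis
    using lattice_cevians_affine_image[OF lattice_cevians_T_tri[OF assms(1,2)] h(1,2), of t]
    by (rule that) (simp add: h(3) T_tri_def convex_hull_3_affine_image)
qed

lemma lattice_equiv_T_tri_if_lattice_cevians_ge_half:
  assumes "lattice_cevians a b c za zb zc l D" "1/2 \<le> l"
  shows "lattice_equiv (T_tri (2 * l - 1)) (convex hull {a, b, c})"
proof -
  note cev = lattice_ceviansD[OF assms(1)]
  obtain i1 i2 j1 j2 where z: "za = (of_int i1, of_int i2)" "zb = (of_int j1, of_int j2)"
    using cev(1) int_vec_iff unfolding unimodular_pair_def by metis
  define x where "x = 2 * l - 1"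
  define r where "r = D / ((3 + x * x) / 2)"
  define U where "U = unimod_map (i1 + j1) (- j1) (i2 + j2) (- j2)"
  define t where "t = a - r *\<^sub>R U (-1, -1)"
  have "0 < 3 + x * x"
    by (simp add: add_pos_nonneg)
  then have "0 < r" "r * ((3 + x * x) / 2) = D"
    unfolding r_def using cev(4) by simp_all
  have "\<bar>real_of_int (i1 * j2 - i2 * j1)\<bar> = 1"
    using cev(1) unfolding unimodular_pair_def z det2_def by simp
  then have "\<bar>i1 * j2 - i2 * j1\<bar> = 1"
    by (metis of_int_1 of_int_abs of_int_eq_iff)
  moreover have "(i1 + j1) * (- j2) - (- j1) * (i2 + j2) = - (i1 * j2 - i2 * j1)"
    by (simp add: algebra_simps)
  ultimately have det: "\<bar>(i1 + j1) * (- j2) - (- j1) * (i2 + j2)\<bar> = 1"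
    by simp
  have "0 \<le> x" "x < 1" "(1 + x) / 2 = l"
    using assms(2) cev(3) unfolding x_def by auto
  have "za + zb + zc = 0"
    using assms(1) unfolding lattice_cevians_def by simp
  then have Uz: "U (1, 1) = za" "U (0, -1) = zb" "U (-1, 0) = zc"
    unfolding U_def unimod_map_def z by (simp_all add: prod_eq_iff algebra_simps eq_neg_iff_add_eq_0)
  have "lattice_cevians (r *\<^sub>R U (-1, -1) + t) (r *\<^sub>R U (x, 1) + t) (r *\<^sub>R U (1, - x) + t) za zb zc l D"
    using lattice_cevians_affine_image[OF lattice_cevians_T_tri[OF \<open>0 \<le> x\<close> \<open>x < 1\<close>] \<open>0 < r\<close> det, of t]
    unfolding U_def[symmetric] Uz \<open>(1 + x) / 2 = l\<close> \<open>r * ((3 + x * x) / 2) = D\<close> .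
  then have "lattice_cevians a (r *\<^sub>R U (x, 1) + t) (r *\<^sub>R U (1, - x) + t) za zb zc l D"
    unfolding t_def by simp
  from lattice_cevians_unique[OF assms(1) this]
  have "(\<lambda>z. r *\<^sub>R U z + t) ` T_tri x = convex hull {a, b, c}"
    unfolding T_tri_def U_def convex_hull_3_affine_image by (simp add: t_def flip: U_def)
  then show ?thesis
    unfolding lattice_equiv_def x_def[symmetric] U_def using \<open>0 < r\<close> det by blast
qed

lemma lattice_cevians_imp_lattice_equiv_T_tri:
  assumes "lattice_cevians a b c za zb zc l D"
  shows "\<exists>x. 0 \<le> x \<and> x < 1 \<and> lattice_equiv (T_tri x) (convex hull {a, b, c})"
proof (cases "1/2 \<le> l")
  case True
  then show ?thesis
    using lattice_equiv_T_tri_if_lattice_cevians_ge_half[OF assms] lattice_ceviansD(3)[OF assms]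
    by (intro exI[of _ "2 * l - 1"]) auto
next
  case False
  then have "lattice_equiv (T_tri (2 * (1 - l) - 1)) (convex hull {a, c, b})"
    by (intro lattice_equiv_T_tri_if_lattice_cevians_ge_half[OF lattice_cevians_reflect[OF assms]]) auto
  moreover have "convex hull {a, c, b} = convex hull {a, b, c}"
    by (simp add: insert_commute)
  ultimately show ?thesis
    using False lattice_ceviansD(2)[OF assms] by (intro exI[of _ "2 * (1 - l) - 1"]) auto
qed

section \<open>Complete triangles have lattice cevians\<close>

lemma lattice_complete_lattice_diam_less:
  assumes "lattice_complete K" "convex_body K'" "K \<subset> K'"
  shows "lattice_diam K < lattice_diam K'"
proof -
  have "K \<noteq> {}"
    using assms(1) interior_subset unfolding lattice_complete_def convex_body_def by blast
  moreover have "bounded K'"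
    using assms(2) unfolding convex_body_def by (simp add: compact_imp_bounded)
  ultimately have "lattice_diam K \<le> lattice_diam K'"
    using assms(3) by (intro lattice_diam_mono) auto
  moreover have "lattice_diam K' \<noteq> lattice_diam K"
    using assms unfolding lattice_complete_def by blast
  ultimately show ?thesis
    by simp
qed

lemma kite_coords:
  assumes "w \<in> convex hull {a + s *\<^sub>R (b - a) + s *\<^sub>R (c - a), a, b, c}" "1/2 \<le> s" "s \<le> 1"
  obtains x y where "w = a + x *\<^sub>R (b - a) + y *\<^sub>R (c - a)"
    "0 \<le> x" "x \<le> 1" "0 \<le> y" "y \<le> 1" "x + y \<le> 2 * s"
proof -
  obtain \<mu> \<nu> w0 where h: "0 \<le> \<mu>" "0 \<le> \<nu>" "\<mu> + \<nu> = 1" "w0 \<in> convex hull {a, b, c}"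
    "w = \<mu> *\<^sub>R (a + s *\<^sub>R (b - a) + s *\<^sub>R (c - a)) + \<nu> *\<^sub>R w0"
    using assms(1) unfolding convex_hull_insert[of "{a, b, c}", OF insert_not_empty] by blast
  obtain x0 y0 where c0: "0 \<le> x0" "0 \<le> y0" "x0 + y0 \<le> 1"
    "w0 = a + x0 *\<^sub>R (b - a) + y0 *\<^sub>R (c - a)"
    using h(4) unfolding convex_hull_3_alt by blast
  have "\<nu> = 1 - \<mu>"
    using h(3) by simp
  then have w: "w = a + (\<mu> * s + \<nu> * x0) *\<^sub>R (b - a) + (\<mu> * s + \<nu> * y0) *\<^sub>R (c - a)"
    unfolding h(5) c0(4) \<open>\<nu> = 1 - \<mu>\<close> by (simp add: algebra_simps)
  have "\<mu> * s \<le> \<mu>" "\<nu> * x0 \<le> \<nu>" "\<nu> * y0 \<le> \<nu>" "\<nu> * x0 + \<nu> * y0 \<le> \<nu>"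
    using h(1,2) c0 assms(3) mult_left_le[of "x0 + y0" \<nu>] by (simp_all add: mult_left_le distrib_left)
  moreover have "\<nu> \<le> 2 * (\<nu> * s)" "\<mu> * s + \<nu> * s = s"
    using h(2,3) assms(2) mult_left_mono[of 1 "2 * s" \<nu>] by (simp_all flip: distrib_right)
  moreover have "0 \<le> \<mu> * s" "0 \<le> \<nu> * x0" "0 \<le> \<nu> * y0"
    using h(1,2) c0(1,2) assms(2) by simp_all
  ultimately show ?thesis
    using h(3) by (intro that[OF w]) linarith+
qed

lemma kite_chord_bounds:
  assumes "det2 (b - a) (c - a) \<noteq> 0" "1/2 \<le> s" "s \<le> 1"
    and "q1 \<in> convex hull {a + s *\<^sub>R (b - a) + s *\<^sub>R (c - a), a, b, c}"
    and "q2 \<in> convex hull {a + s *\<^sub>R (b - a) + s *\<^sub>R (c - a), a, b, c}"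
    and "q2 - q1 = x *\<^sub>R (b - a) + y *\<^sub>R (c - a)"
  shows "\<bar>x\<bar> \<le> 1" "\<bar>y\<bar> \<le> 1" "\<bar>x + y\<bar> \<le> 2 * s"
proof -
  obtain x1 y1 where q1: "q1 = a + x1 *\<^sub>R (b - a) + y1 *\<^sub>R (c - a)"
    "0 \<le> x1" "x1 \<le> 1" "0 \<le> y1" "y1 \<le> 1" "x1 + y1 \<le> 2 * s"
    using kite_coords[OF assms(4,2,3)] by blast
  obtain x2 y2 where q2: "q2 = a + x2 *\<^sub>R (b - a) + y2 *\<^sub>R (c - a)"
    "0 \<le> x2" "x2 \<le> 1" "0 \<le> y2" "y2 \<le> 1" "x2 + y2 \<le> 2 * s"
    using kite_coords[OF assms(5,2,3)] by blast
  have "x *\<^sub>R (b - a) + y *\<^sub>R (c - a) = (x2 - x1) *\<^sub>R (b - a) + (y2 - y1) *\<^sub>R (c - a)"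
    unfolding assms(6)[symmetric] q1(1) q2(1) by (simp add: algebra_simps)
  then have "x = x2 - x1" "y = y2 - y1"
    using det2_coords_unique[OF assms(1)] by blast+
  then show "\<bar>x\<bar> \<le> 1" "\<bar>y\<bar> \<le> 1" "\<bar>x + y\<bar> \<le> 2 * s"
    using q1(2-6) q2(2-6) by (simp_all add: abs_le_iff)
qed

lemma triangle_psubset_kite:
  fixes a b c :: "real \<times> real"
  assumes "\<not> collinear {a, b, c}" "1/2 < s"
  shows "convex hull {a, b, c} \<subset> convex hull {a + s *\<^sub>R (b - a) + s *\<^sub>R (c - a), a, b, c}"
proof -
  have "a + s *\<^sub>R (b - a) + s *\<^sub>R (c - a) \<notin> convex hull {a, b, c}"
  proof
    assume "a + s *\<^sub>R (b - a) + s *\<^sub>R (c - a) \<in> convex hull {a, b, c}"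
    then obtain x y where xy: "x + y \<le> 1" "s *\<^sub>R (b - a) + s *\<^sub>R (c - a) = x *\<^sub>R (b - a) + y *\<^sub>R (c - a)"
      unfolding convex_hull_3_alt by auto
    moreover have "det2 (b - a) (c - a) \<noteq> 0"
      using assms(1) collinear_iff_det2 by blast
    ultimately have "s = x" "s = y"
      using det2_coords_unique by blast+
    then show False
      using xy(1) assms(2) by simp
  qed
  moreover have "convex hull {a, b, c} \<subseteq> convex hull {a + s *\<^sub>R (b - a) + s *\<^sub>R (c - a), a, b, c}"
    by (rule hull_mono) auto
  ultimately show ?thesis
    by (auto intro: hull_inc)
qed

lemma scaled_abs_less:
  fixes D t x e :: real
  assumes "0 \<le> D" "D < t" "t * \<bar>x\<bar> \<le> e" "0 < e"
  shows "D * \<bar>x\<bar> < e"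
proof (cases "x = 0")
  case False
  then have "D * \<bar>x\<bar> < t * \<bar>x\<bar>"
    using assms(2) by simp
  then show ?thesis
    using assms(3) by linarith
qed (use assms(4) in simp)

lemma lattice_complete_kite_chord:
  assumes "\<not> collinear {a, b, c}" "lattice_complete (convex hull {a, b, c})" "1/2 < s" "s < 1"
  defines "D \<equiv> lattice_diam (convex hull {a, b, c})"
  obtains z x y where "primitive_vec z" "z = x *\<^sub>R (b - a) + y *\<^sub>R (c - a)"
    "D * \<bar>x\<bar> < 1" "D * \<bar>y\<bar> < 1" "D * \<bar>x + y\<bar> < 2 * s"
proof -
  define K where "K = convex hull {a + s *\<^sub>R (b - a) + s *\<^sub>R (c - a), a, b, c}"
  have det: "det2 (b - a) (c - a) \<noteq> 0"
    using assms(1) collinear_iff_det2 by blast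
  have "convex hull {a, b, c} \<subset> K"
    unfolding K_def using assms(1,3) by (rule triangle_psubset_kite)
  moreover have "convex_body K"
    using interior_mono[OF psubset_imp_subset[OF \<open>convex hull {a, b, c} \<subset> K\<close>]]
      convex_body_triangle[OF assms(1)]
    unfolding convex_body_def K_def by (auto simp: finite_imp_compact_convex_hull)
  ultimately have "D < lattice_diam K"
    using lattice_complete_lattice_diam_less[OF assms(2)] unfolding D_def by blast
  then obtain q1 q2 z t where ch: "q1 \<in> K" "q2 \<in> K" "primitive_vec z" "0 \<le> t"
    "q2 - q1 = t *\<^sub>R z" "D < t"
    using lattice_diam_gtE[of K] \<open>convex hull {a, b, c} \<subset> K\<close> by blast
  define x where "x = det2 z (c - a) / det2 (b - a) (c - a)"
  define y where "y = det2 (b - a) z / det2 (b - a) (c - a)"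
  have z: "z = x *\<^sub>R (b - a) + y *\<^sub>R (c - a)"
    unfolding x_def y_def by (rule det2_decomposition[OF det])
  then have "q2 - q1 = (t * x) *\<^sub>R (b - a) + (t * y) *\<^sub>R (c - a)"
    using ch(5) by (simp add: scaleR_add_right)
  then have "\<bar>t * x\<bar> \<le> 1" "\<bar>t * y\<bar> \<le> 1" "\<bar>t * x + t * y\<bar> \<le> 2 * s"
    using kite_chord_bounds[OF det _ _ ch(1,2)[unfolded K_def]] assms(3,4) by auto
  then have "t * \<bar>x\<bar> \<le> 1" "t * \<bar>y\<bar> \<le> 1" "t * \<bar>x + y\<bar> \<le> 2 * s"
    using ch(4) by (simp_all add: abs_mult flip: distrib_left)
  moreover have "0 < D"
    unfolding D_def by (rule lattice_diam_triangle_pos[OF assms(1)])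
  ultimately show ?thesis
    using ch(6) assms(3) by (intro that[OF ch(3) z] scaled_abs_less[of D t]) auto
qed

lemma lattice_complete_near_cevian:
  assumes "\<not> collinear {a, b, c}" "lattice_complete (convex hull {a, b, c})" "1/2 < s" "s < 1"
  defines "D \<equiv> lattice_diam (convex hull {a, b, c})"
  obtains z x y where "int_vec z" "z = x *\<^sub>R (b - a) + y *\<^sub>R (c - a)" "0 < x" "0 < y"
    "D * x < 1" "D * y < 1" "1 \<le> D * (x + y)" "D * (x + y) < 2 * s"
proof -
  have "0 < D"
    unfolding D_def by (rule lattice_diam_triangle_pos[OF assms(1)])
  obtain z x y where z: "primitive_vec z" "z = x *\<^sub>R (b - a) + y *\<^sub>R (c - a)"
    and bounds: "D * \<bar>x\<bar> < 1" "D * \<bar>y\<bar> < 1" "D * \<bar>x + y\<bar> < 2 * s"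
    using lattice_complete_kite_chord[OF assms(1-4)] unfolding D_def by blast
  have "1 \<le> D * hexnorm x y"
    unfolding D_def using primitive_vec_imp_int_vec[OF z(1)] primitive_vec_nonzero[OF z(1)] z(2)
    by (rule lattice_diam_triangle_ge)
  moreover have "hexnorm x y = \<bar>x\<bar> \<or> hexnorm x y = \<bar>y\<bar> \<or> hexnorm x y = \<bar>x + y\<bar>"
    unfolding hexnorm_def by (auto simp: max_def)
  ultimately have "1 \<le> D * \<bar>x + y\<bar>"
    using bounds by auto
  define \<sigma> where "\<sigma> = sgn (x + y)"
  have "x + y \<noteq> 0"
    using \<open>1 \<le> D * \<bar>x + y\<bar>\<close> by auto
  then have \<sigma>: "\<bar>\<sigma>\<bar> = 1" "\<sigma> \<in> \<int>" "\<sigma> * (x + y) = \<bar>x + y\<bar>"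
    unfolding \<sigma>_def by (auto simp: sgn_real_def abs_real_def)
  have "int_vec (\<sigma> *\<^sub>R z)"
    using \<sigma>(2) primitive_vec_imp_int_vec[OF z(1)] by (rule int_vec_scaleR)
  moreover have "\<sigma> *\<^sub>R z = (\<sigma> * x) *\<^sub>R (b - a) + (\<sigma> * y) *\<^sub>R (c - a)"
    using z(2) by (simp add: scaleR_add_right)
  moreover have "D * (\<sigma> * x) < 1" "D * (\<sigma> * y) < 1"
  proof -
    have "\<sigma> * x \<le> \<bar>x\<bar>" "\<sigma> * y \<le> \<bar>y\<bar>"
      using abs_ge_self[of "\<sigma> * x"] abs_ge_self[of "\<sigma> * y"] \<sigma>(1) by (simp_all add: abs_mult)
    then have "D * (\<sigma> * x) \<le> D * \<bar>x\<bar>" "D * (\<sigma> * y) \<le> D * \<bar>y\<bar>"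
      using \<open>0 < D\<close> by (simp_all add: mult_left_mono)
    then show "D * (\<sigma> * x) < 1" "D * (\<sigma> * y) < 1"
      using bounds(1,2) by linarith+
  qed
  moreover have "1 \<le> D * (\<sigma> * x + \<sigma> * y)" "D * (\<sigma> * x + \<sigma> * y) < 2 * s"
    using \<open>1 \<le> D * \<bar>x + y\<bar>\<close> bounds(3) \<sigma>(3) by (simp_all add: distrib_left)
  moreover have "0 < D * (\<sigma> * x)" "0 < D * (\<sigma> * y)"
    using calculation(3-5) by (simp_all add: distrib_left)
  then have "0 < \<sigma> * x" "0 < \<sigma> * y"
    using \<open>0 < D\<close> zero_less_mult_pos by blast+
  ultimately show ?thesis
    using that by blast
qed

lemma bounded_coords_le:
  assumes "det2 u v \<noteq> 0"
  shows "bounded {z. \<bar>det2 z v / det2 u v\<bar> \<le> r \<and> \<bar>det2 u z / det2 u v\<bar> \<le> r}"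
proof -
  have "norm z \<le> r * norm u + r * norm v"
    if "\<bar>det2 z v / det2 u v\<bar> \<le> r" "\<bar>det2 u z / det2 u v\<bar> \<le> r" for z
  proof -
    have "norm z \<le> \<bar>det2 z v / det2 u v\<bar> * norm u + \<bar>det2 u z / det2 u v\<bar> * norm v"
      using det2_decomposition[OF assms, of z] norm_triangle_ineq[of "(det2 z v / det2 u v) *\<^sub>R u"]
      by (metis norm_scaleR)
    also have "\<dots> \<le> r * norm u + r * norm v"
      using that by (intro add_mono mult_right_mono) auto
    finally show ?thesis .
  qed
  then show ?thesis
    unfolding bounded_iff by blast
qed

lemma lattice_complete_vertex_cevian:
  assumes "\<not> collinear {a, b, c}" "lattice_complete (convex hull {a, b, c})"
  defines "D \<equiv> lattice_diam (convex hull {a, b, c})"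
  obtains z l where "int_vec z" "0 < l" "l < 1" "a + D *\<^sub>R z = l *\<^sub>R b + (1 - l) *\<^sub>R c"
proof -
  define u v where "u = b - a" and "v = c - a"
  have det: "det2 u v \<noteq> 0"
    using assms(1) collinear_iff_det2 unfolding u_def v_def by blast
  have "0 < D"
    unfolding D_def by (rule lattice_diam_triangle_pos[OF assms(1)])
  define S where "S = {z. \<bar>det2 z v / det2 u v\<bar> \<le> 1 / D \<and> \<bar>det2 u z / det2 u v\<bar> \<le> 1 / D}"
  have "bounded S"
    unfolding S_def by (rule bounded_coords_le[OF det])
  then obtain \<delta> where \<delta>: "0 < \<delta>" "\<And>z. z \<in> S \<Longrightarrow> int_vec z \<Longrightarrow> 1 < D * (det2 z v / det2 u v + det2 u z / det2 u v)
      \<Longrightarrow> 1 + \<delta> \<le> D * (det2 z v / det2 u v + det2 u z / det2 u v)"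
    using int_vec_values_gap[where c = 1 and f = "\<lambda>z. D * (det2 z v / det2 u v + det2 u z / det2 u v)"]
    by blast
  \<comment> \<open>Integer vectors of \<open>S\<close> with \<open>D * (x + y) > 1\<close> have \<open>D * (x + y) \<ge> 1 + \<delta> \<ge> 2 * s\<close>,
    so the near cevian found below is exact.\<close>
  define s where "s = (1 + min \<delta> (1/2)) / 2"
  have "1/2 < s" "s < 1" "2 * s \<le> 1 + \<delta>"
    unfolding s_def using \<delta>(1) by (auto simp: min_def)
  then obtain z x y where z: "int_vec z" "z = x *\<^sub>R u + y *\<^sub>R v" "0 < x" "0 < y"
    "D * x < 1" "D * y < 1" "1 \<le> D * (x + y)" "D * (x + y) < 2 * s"
    using lattice_complete_near_cevian[OF assms(1,2)] unfolding D_def u_def v_def by blast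
  have cx: "det2 z v / det2 u v = x" and cy: "det2 u z / det2 u v = y"
    using det2_coords_unique[OF det] det2_decomposition[OF det, of z] z(2) by metis+
  have "z \<in> S"
    unfolding S_def mem_Collect_eq cx cy using z(3-6) \<open>0 < D\<close> by (simp add: pos_le_divide_eq mult.commute)
  moreover have "\<not> 1 + \<delta> \<le> D * (x + y)"
    using z(8) \<open>2 * s \<le> 1 + \<delta>\<close> by simp
  ultimately have "\<not> 1 < D * (x + y)"
    using \<delta>(2)[OF _ z(1)] unfolding cx cy by blast
  then have "D * y = 1 - D * x"
    using z(7) by (simp add: distrib_left)
  have "a + D *\<^sub>R z = a + (D * x) *\<^sub>R (b - a) + (D * y) *\<^sub>R (c - a)"
    unfolding z(2) u_def v_def by (simp add: scaleR_add_right)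
  also have "\<dots> = (D * x) *\<^sub>R b + (1 - D * x) *\<^sub>R c"
    unfolding \<open>D * y = 1 - D * x\<close> by (simp add: algebra_simps)
  finally show ?thesis
    using that[OF z(1), of "D * x"] z(3,5) \<open>0 < D\<close> by simp
qed

lemma hexnorm_fractional_less_1:
  fixes \<sigma> \<tau> l :: real
  assumes "0 \<le> \<sigma>" "\<sigma> < 1" "0 \<le> \<tau>" "\<tau> < 1" "0 < l" "l < 1"
  shows "hexnorm (\<sigma> * l - \<tau>) (\<sigma> - \<sigma> * l + \<tau> * l) < 1"
proof -
  have "0 \<le> \<sigma> * l" "\<sigma> * l \<le> \<sigma>" "0 \<le> \<tau> * l" "\<tau> * l \<le> \<tau>" "\<tau> * l < l"
    using assms by (simp_all add: mult_left_le)
  moreover have "\<sigma> - \<sigma> * l < 1 - l"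
    using mult_strict_right_mono[OF assms(2), of "1 - l"] assms(6) by (simp add: algebra_simps)
  ultimately show ?thesis
    using assms(1-4) unfolding hexnorm_less_iff abs_less_iff by (intro conjI; linarith)
qed

lemma cevian_pair_unimodular:
  assumes "\<not> collinear {a, b, c}" "int_vec za" "int_vec zb" "0 < l" "l < 1"
  defines "D \<equiv> lattice_diam (convex hull {a, b, c})"
  assumes za: "D *\<^sub>R za = l *\<^sub>R (b - a) + (1 - l) *\<^sub>R (c - a)"
    and zb: "D *\<^sub>R zb = l *\<^sub>R (c - a) - (b - a)"
  shows "unimodular_pair za zb"
proof -
  have "det2 (b - a) (c - a) \<noteq> 0"
    using assms(1) collinear_iff_det2 by blast
  then have det: "det2 za zb \<noteq> 0"
    using det2_cevian_sides[OF za zb] sq_sub_self_add_one_pos[of l] by auto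
  have "\<bar>det2 za zb\<bar> = 1"
  proof (rule ccontr)
    assume "\<bar>det2 za zb\<bar> \<noteq> 1"
    then obtain \<sigma> \<tau> where st: "0 \<le> \<sigma>" "\<sigma> < 1" "0 \<le> \<tau>" "\<tau> < 1" "\<sigma> \<noteq> 0 \<or> \<tau> \<noteq> 0"
      "int_vec (\<sigma> *\<^sub>R za + \<tau> *\<^sub>R zb)"
      using not_unimodular_fractional_point[OF assms(2,3) det] by blast
    have Dw: "D *\<^sub>R (\<sigma> *\<^sub>R za + \<tau> *\<^sub>R zb)
        = (\<sigma> * l - \<tau>) *\<^sub>R (b - a) + (\<sigma> - \<sigma> * l + \<tau> * l) *\<^sub>R (c - a)"
    proof -
      have "D *\<^sub>R (\<sigma> *\<^sub>R za + \<tau> *\<^sub>R zb) = \<sigma> *\<^sub>R (D *\<^sub>R za) + \<tau> *\<^sub>R (D *\<^sub>R zb)"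
        by (simp add: algebra_simps)
      also have "\<dots> = (\<sigma> * l - \<tau>) *\<^sub>R (b - a) + (\<sigma> - \<sigma> * l + \<tau> * l) *\<^sub>R (c - a)"
        unfolding za zb by (simp add: algebra_simps)
      finally show ?thesis .
    qed
    have "hexnorm (\<sigma> * l - \<tau>) (\<sigma> - \<sigma> * l + \<tau> * l) < 1"
      using st(1-4) assms(4,5) by (rule hexnorm_fractional_less_1)
    then have "\<sigma> *\<^sub>R za + \<tau> *\<^sub>R zb = 0"
      by (rule int_vec_eq_0_if_hexnorm_less_1[OF assms(1) st(6) Dw[unfolded D_def]])
    then have "\<sigma> = 0 \<and> \<tau> = 0"
      using det2_coords_unique[OF det, of \<sigma> \<tau> 0 0] by simp
    then show False
      using st(5) by simp
  qed
  then show ?thesis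
    using assms(2,3) unfolding unimodular_pair_def by simp
qed

lemma lattice_complete_triangle_cevians:
  assumes "\<not> collinear {a, b, c}" "lattice_complete (convex hull {a, b, c})"
  obtains za zb zc l where "lattice_cevians a b c za zb zc l (lattice_diam (convex hull {a, b, c}))"
proof -
  define D where "D = lattice_diam (convex hull {a, b, c})"
  have hull: "convex hull {b, c, a} = convex hull {a, b, c}" "convex hull {c, a, b} = convex hull {a, b, c}"
    by (simp_all add: insert_commute)
  have nc: "\<not> collinear {b, c, a}" "\<not> collinear {c, a, b}"
    using assms(1) by (simp_all add: insert_commute)
  obtain za la where A: "int_vec za" "0 < la" "la < 1" "a + D *\<^sub>R za = la *\<^sub>R b + (1 - la) *\<^sub>R c"
    using lattice_complete_vertex_cevian[OF assms] unfolding D_def by blast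
  obtain zb lb where B: "int_vec zb" "0 < lb" "lb < 1" "b + D *\<^sub>R zb = lb *\<^sub>R c + (1 - lb) *\<^sub>R a"
    using lattice_complete_vertex_cevian[OF nc(1)] assms(2) unfolding hull D_def by blast
  obtain zc lc where C: "int_vec zc" "0 < lc" "lc < 1" "c + D *\<^sub>R zc = lc *\<^sub>R a + (1 - lc) *\<^sub>R b"
    using lattice_complete_vertex_cevian[OF nc(2)] assms(2) unfolding hull D_def by blast
  have sides: "D *\<^sub>R za = la *\<^sub>R (b - a) + (1 - la) *\<^sub>R (c - a)"
    "D *\<^sub>R zb = lb *\<^sub>R (c - a) - (b - a)" "D *\<^sub>R zc = (1 - lc) *\<^sub>R (b - a) - (c - a)"
    using A(4) B(4) C(4) by (simp_all add: algebra_simps)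
  have "D *\<^sub>R (za + zb + zc) = (la - lc) *\<^sub>R (b - a) + (lb - la) *\<^sub>R (c - a)"
    unfolding scaleR_add_right sides by (simp add: algebra_simps)
  moreover have "hexnorm (la - lc) (lb - la) < 1"
    using A(2,3) B(2,3) C(2,3) unfolding hexnorm_less_iff by auto
  ultimately have "za + zb + zc = 0"
    using A(1) B(1) C(1) unfolding D_def
    by (intro int_vec_eq_0_if_hexnorm_less_1[OF assms(1)] int_vec_add)
  then have "(la - lc) *\<^sub>R (b - a) + (lb - la) *\<^sub>R (c - a) = 0 *\<^sub>R (b - a) + 0 *\<^sub>R (c - a)"
    using \<open>D *\<^sub>R (za + zb + zc) = _\<close> by simp
  then have "lc = la" "lb = la"
    using det2_coords_unique assms(1) collinear_iff_det2 by (metis eq_iff_diff_eq_0)+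
  have "unimodular_pair za zb"
    by (rule cevian_pair_unimodular[OF assms(1) A(1) B(1) A(2,3)])
      (use sides(1,2) \<open>lb = la\<close> in \<open>simp_all add: D_def\<close>)
  then have "lattice_cevians a b c za zb zc la D"
    using A B C \<open>za + zb + zc = 0\<close> lattice_diam_triangle_pos[OF assms(1)]
    unfolding lattice_cevians_def D_def \<open>lc = la\<close> \<open>lb = la\<close> by simp
  then show ?thesis
    using that unfolding D_def by blast
qed

theorem proposition4p7:
  fixes T :: "(real \<times> real) set"
  assumes "triangle T"
  shows "(lattice_reduced T \<and> lattice_complete T) \<longleftrightarrow>
         (\<exists>x::real. 0 \<le> x \<and> x < 1 \<and> lattice_equiv (T_tri x) T)"
proof
  assume "lattice_reduced T \<and> lattice_complete T"
  moreover obtain a b c where abc: "\<not> collinear {a, b, c}" "T = convex hull {a, b, c}"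
    using assms unfolding triangle_def by blast
  ultimately obtain za zb zc l where "lattice_cevians a b c za zb zc l (lattice_diam T)"
    using lattice_complete_triangle_cevians[OF abc(1)] by blast
  then show "\<exists>x::real. 0 \<le> x \<and> x < 1 \<and> lattice_equiv (T_tri x) T"
    unfolding abc(2) by (rule lattice_cevians_imp_lattice_equiv_T_tri)
next
  assume "\<exists>x::real. 0 \<le> x \<and> x < 1 \<and> lattice_equiv (T_tri x) T"
  then obtain x where x: "0 \<le> x" "x < 1" "lattice_equiv (T_tri x) T"
    by blast
  obtain a b c za zb zc l D where "lattice_cevians a b c za zb zc l D" "T = convex hull {a, b, c}"
    using lattice_equiv_T_tri_imp_lattice_cevians[OF x] .
  then show "lattice_reduced T \<and> lattice_complete T"
    using lattice_cevians_reduced lattice_cevians_complete by blast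
qed

end
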